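(* (a) Consider Algorithm 1 with $x_0=0$, run on arbitrary vectors $g_t$ and non-negative learning rates. For any $t\ge1$ and any $x^*\in\mathbb{R}^d$, $$\|x_t\|\le\max\Big\{\|x^*\|+\sqrt{(S_{t-1}+2)B_{\phi_t}(x^*,x_t)},\;2\|x^*\|,\;4(S_{t-1}+2)B_{\phi_t}(x^*,x_t)\Big\}.$$ (b) If in addition $F$ is variationally coherent with minimizer $x^*$, $\mathcal{F}_t$ is the $\sigma$-algebra generated by $x_1,\dots,x_t,g_1,\dots,g_{t-1}$, $\mathbb{E}[g_t\mid\mathcal{F}_t]=\nabla F(x_t)$ and $\|g_t\|\le G$ a.s., each $\eta_t\ge0$ is $\mathcal{F}_t$-measurable, and for some $\gamma>0$ almost surely $\sum_t\eta_t^2\|g_t\|^2<\gamma$, $\sum_t\eta_t=\infty$, $\eta_t\le1/G$ for all $t$, then $\sup_{t\ge1}\|x_t\|<\infty$ almost surely.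
   Context: $\|\cdot\|$ is the Euclidean norm, $G>0$. For differentiable $f$, $B_f(x,y)=f(x)-f(y)-\langle\nabla f(y),x-y\rangle$. A function $F:\mathbb{R}^d\to\mathbb{R}$ is variationally coherent if it is continuously differentiable, has a unique minimizer $x^*$, and $\langle\nabla F(x),x-x^*\rangle\ge0$ for all $x$, with equality iff $x=x^*$. Auxiliary functions: $\psi^*(\theta,S,Q)=\exp\big(\max_{\beta\in[-1/2,1/2]}(\theta\beta-\beta^2S^2)-Q\big)$ for $\theta\in\mathbb{R},S>0,Q\ge0$; $\psi(x,S,Q)=\sup_{\theta\in\mathbb{R}}(\theta x-\psi^*(\theta,S,Q))$. Algorithm 1 with $x_0=0$: $S_0^2=4$, $Q_0=0$, $\theta_0=0$. For $t=1,2,\dots$: $\phi_t(x)=\psi(\|x\|,S_{t-1},Q_{t-1})$; $x_t$ is the unique minimizer of $\phi_t(x)-\langle\theta_{t-1},x\rangle$; receive $g_t$; $\ell_t=\eta_tg_t$, $S_t^2=S_{t-1}^2+\|\ell_t\|^2$ ($S_t>0$), $Q_t=Q_{t-1}+\|\ell_t\|^2/S_t^2$, $\theta_t=\theta_{t-1}-\ell_t$. *)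

theory Defs
  imports "HOL-Analysis.Analysis" "HOL-Probability.Probability"
begin

definition psi_star :: "real \<Rightarrow> real \<Rightarrow> real \<Rightarrow> real" where
  "psi_star \<theta> S Q = exp ((SUP \<beta>\<in>{-1/2..1/2}. \<theta> * \<beta> - \<beta>^2 * S^2) - Q)"

definition psi :: "real \<Rightarrow> real \<Rightarrow> real \<Rightarrow> real" where
  "psi x S Q = (SUP \<theta>. \<theta> * x - psi_star \<theta> S Q)"

definition bregman :: "('a::real_normed_vector \<Rightarrow> real) \<Rightarrow> 'a \<Rightarrow> 'a \<Rightarrow> real" where
  "bregman f x y = f x - f y - frechet_derivative f (at y) (x - y)"

text \<open>Algorithm 1 with x_0 = 0.  Gradients g t and learning rates eta t are indexed from t = 1;
  l_t = eta_t g_t.  alg_S2 t is S_t^2.\<close>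
primrec alg_S2 :: "(nat \<Rightarrow> 'a::euclidean_space) \<Rightarrow> (nat \<Rightarrow> real) \<Rightarrow> nat \<Rightarrow> real" where
  "alg_S2 g \<eta> 0 = 4"
| "alg_S2 g \<eta> (Suc t) = alg_S2 g \<eta> t + (norm (\<eta> (Suc t) *\<^sub>R g (Suc t)))^2"

primrec alg_Q :: "(nat \<Rightarrow> 'a::euclidean_space) \<Rightarrow> (nat \<Rightarrow> real) \<Rightarrow> nat \<Rightarrow> real" where
  "alg_Q g \<eta> 0 = 0"
| "alg_Q g \<eta> (Suc t) = alg_Q g \<eta> t + (norm (\<eta> (Suc t) *\<^sub>R g (Suc t)))^2 / alg_S2 g \<eta> (Suc t)"

primrec alg_theta :: "(nat \<Rightarrow> 'a::euclidean_space) \<Rightarrow> (nat \<Rightarrow> real) \<Rightarrow> nat \<Rightarrow> 'a" where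
  "alg_theta g \<eta> 0 = 0"
| "alg_theta g \<eta> (Suc t) = alg_theta g \<eta> t - \<eta> (Suc t) *\<^sub>R g (Suc t)"

definition alg_S :: "(nat \<Rightarrow> 'a::euclidean_space) \<Rightarrow> (nat \<Rightarrow> real) \<Rightarrow> nat \<Rightarrow> real" where
  "alg_S g \<eta> t = sqrt (alg_S2 g \<eta> t)"

definition alg_phi :: "(nat \<Rightarrow> 'a::euclidean_space) \<Rightarrow> (nat \<Rightarrow> real) \<Rightarrow> nat \<Rightarrow> 'a \<Rightarrow> real" where
  "alg_phi g \<eta> t x = psi (norm x) (alg_S g \<eta> (t - 1)) (alg_Q g \<eta> (t - 1))"

definition alg_x :: "(nat \<Rightarrow> 'a::euclidean_space) \<Rightarrow> (nat \<Rightarrow> real) \<Rightarrow> nat \<Rightarrow> 'a" where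
  "alg_x g \<eta> t = (if t = 0 then 0 else
     (THE x. \<forall>y. alg_phi g \<eta> t x - inner (alg_theta g \<eta> (t - 1)) x
                 \<le> alg_phi g \<eta> t y - inner (alg_theta g \<eta> (t - 1)) y))"

definition variationally_coherent ::
  "('a::euclidean_space \<Rightarrow> real) \<Rightarrow> ('a \<Rightarrow> 'a) \<Rightarrow> 'a \<Rightarrow> bool" where
  "variationally_coherent F F' xs \<longleftrightarrow>
     (\<forall>x. (F has_derivative (\<lambda>h. inner (F' x) h)) (at x)) \<and> continuous_on UNIV F' \<and>
     (\<forall>y. F xs \<le> F y) \<and> (\<forall>z. (\<forall>y. F z \<le> F y) \<longrightarrow> z = xs) \<and>
     (\<forall>x. inner (F' x) (x - xs) \<ge> 0 \<and> (inner (F' x) (x - xs) = 0 \<longleftrightarrow> x = xs))"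

definition rand_x :: "(nat \<Rightarrow> 'w \<Rightarrow> 'a::euclidean_space) \<Rightarrow> (nat \<Rightarrow> 'w \<Rightarrow> real) \<Rightarrow> nat \<Rightarrow> 'w \<Rightarrow> 'a" where
  "rand_x g \<eta> t w = alg_x (\<lambda>s. g s w) (\<lambda>s. \<eta> s w) t"

definition gen_sigma :: "'w measure \<Rightarrow> ('w \<Rightarrow> 'a::topological_space) set \<Rightarrow> 'w measure" where
  "gen_sigma M fs = sigma (space M) (\<Union>f\<in>fs. {f -` A \<inter> space M | A. A \<in> sets borel})"

definition alg_filtration ::
  "'w measure \<Rightarrow> (nat \<Rightarrow> 'w \<Rightarrow> 'a::euclidean_space) \<Rightarrow> (nat \<Rightarrow> 'w \<Rightarrow> real) \<Rightarrow> nat \<Rightarrow> 'w measure" where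
  "alg_filtration M g \<eta> t =
     gen_sigma M ({rand_x g \<eta> s | s. 1 \<le> s \<and> s \<le> t} \<union> {g s | s. 1 \<le> s \<and> s < t})"

end

theory Submission
  imports Defs
begin

text \<open>
  The dual potential is explicit: \<open>\<psi>\<^sup>*(\<sigma>, S, Q) = exp (h \<sigma> - Q)\<close>, where \<open>h \<sigma>\<close> is the maximum
  of \<open>\<sigma> \<beta> - \<beta>\<^sup>2 S\<^sup>2\<close> over \<open>|\<beta>| \<le> 1/2\<close>; \<open>h\<close> is smooth with the maximiser as derivative.
  Hence \<open>x_t\<close> is the gradient of \<open>\<theta> \<mapsto> \<psi>\<^sup>*(\<parallel>\<theta>\<parallel>)\<close> at \<open>\<theta>_(t-1)\<close>, and the Bregman divergence of
  \<open>\<phi>_t\<close> at \<open>(y, x_t)\<close> is the Fenchel gap \<open>\<psi>(\<parallel>y\<parallel>) + \<psi>\<^sup>*(\<parallel>\<theta>\<parallel>) - \<langle>\<theta>, y\<rangle>\<close>.  Part (a) bounds this gap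
  from below by Fenchel--Young at the shifted dual point \<open>\<parallel>\<theta>\<parallel> - \<delta>\<close>; choosing \<open>\<delta>\<close> according to
  whether \<open>S\<^sup>2 \<beta>\<^sup>2\<close> is small, \<open>\<beta>\<close> the maximiser, yields the three terms of the maximum.

  For part (b), \<open>V_n = \<psi>\<^sup>*(\<parallel>\<theta>_n\<parallel>) - \<langle>\<theta>_n, x\<^sup>*\<rangle> + K\<close> satisfies, pathwise,
  \<open>V_(n+1) exp (-3 \<parallel>\<ell>_(n+1)\<parallel>\<^sup>2) \<le> V_n - \<langle>\<ell>_(n+1), x_(n+1) - x\<^sup>*\<rangle>\<close> once \<open>\<parallel>\<ell>\<parallel> \<le> 1\<close> and \<open>K\<close> is large.
  Hence \<open>Z_n = V_n exp (-3 (S_n\<^sup>2 - 4))\<close> is a nonnegative supermartingale: by variational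
  coherence the conditional expectation of the subtracted term is \<open>\<eta> \<langle>\<nabla>F(x), x - x\<^sup>*\<rangle> \<ge> 0\<close>.
  By the maximal inequality \<open>Z\<close> stays bounded almost surely, and
  \<open>\<parallel>x_(n+1)\<parallel> \<le> V_n \<le> exp (3 \<gamma>) Z_n\<close> because \<open>S_n\<^sup>2 \<le> 4 + \<gamma>\<close>.
\<close>

lemma linear_minus_square_le:
  fixes a x y :: real
  assumes "a > 0"
  shows "x * y - a * y^2 \<le> x^2 / (4*a)"
proof -
  have "0 \<le> (x - 2*a*y)^2" by simp
  then have "4*a*(x * y - a * y^2) \<le> x^2" by (simp add: power2_eq_square algebra_simps)
  then show ?thesis using assms by (simp add: field_simps)
qed

lemma exp_ge_square_half: "(x::real) \<ge> -2 \<Longrightarrow> exp x \<ge> (1 + x/2)^2"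
proof -
  assume "x \<ge> -2"
  then have "(1 + x/2)^2 \<le> (exp (x/2))^2" by (intro power_mono exp_ge_add_one_self) auto
  also have "\<dots> = exp x" by (simp add: power2_eq_square mult_exp_exp)
  finally show ?thesis .
qed

lemma exp_half_ge_square: "(\<sigma>::real) \<ge> 0 \<Longrightarrow> exp (\<sigma>/2) \<ge> \<sigma>^2/16"
  using exp_ge_square_half[of "\<sigma>/2"] by (simp add: power2_eq_square algebra_simps)

lemma exp_minus_le_quadratic:
  assumes "(y::real) \<ge> 0"
  shows "exp (-y) \<le> 1 - y + y^2/2"
proof -
  have "0 \<le> (y - 1)^2" by simp
  then have q: "1 - y + y^2/2 > 0" unfolding power2_eq_square by (simp add: algebra_simps)
  have "1 \<le> 1 + (y^2/2)^2" by simp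
  also have "\<dots> = (1 - y + y^2/2) * (1 + y + y^2/2)" by (simp add: power2_eq_square algebra_simps)
  also have "\<dots> \<le> (1 - y + y^2/2) * exp y"
    using exp_lower_Taylor_quadratic[OF assms] q by (intro mult_left_mono) auto
  finally show ?thesis by (simp add: exp_minus field_simps)
qed

lemma exp_le_quadratic:
  assumes "\<bar>x::real\<bar> \<le> 9/16"
  shows "exp x \<le> 1 + x + (8/7) * x^2"
proof -
  obtain t where t: "\<bar>t\<bar> \<le> \<bar>x\<bar>" "exp x = (\<Sum>m<2. x^m / fact m) + exp t / fact 2 * x^2"
    using Maclaurin_exp_le[of x 2] by blast
  have "exp (-(9/16::real)) \<ge> 1 + (-(9/16))" by (rule exp_ge_add_one_self)
  then have "exp (9/16::real) \<le> 16/7" by (simp add: exp_minus field_simps)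
  moreover have "exp t \<le> exp (9/16)" using t(1) assms by simp
  ultimately have "exp t \<le> 16/7" by linarith
  then have "exp t / fact 2 * x^2 \<le> 8/7 * x^2" by (intro mult_right_mono) auto
  then show ?thesis using t(2) by (simp add: numeral_2_eq_2)
qed

lemma has_derivative_quadratic_remainder:
  fixes f :: "'a::real_normed_vector \<Rightarrow> real"
  assumes "bounded_linear L" "d > 0" "C \<ge> 0"
    and "\<And>y. norm (y - x) < d \<Longrightarrow> \<bar>f y - f x - L (y - x)\<bar> \<le> C * (norm (y - x))^2"
  shows "(f has_derivative L) (at x)"
  unfolding has_derivative_at_alt
proof (intro conjI allI impI)
  show "bounded_linear L" by fact
  fix e :: real assume e: "e > 0"
  define d' where "d' = min d (e / (C + 1))"
  have d': "d' > 0" unfolding d'_def using assms e by simp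
  show "\<exists>d>0. \<forall>y. norm (y - x) < d \<longrightarrow> norm (f y - f x - L (y - x)) \<le> e * norm (y - x)"
  proof (intro exI[of _ d'] conjI allI impI d')
    fix y assume y: "norm (y - x) < d'"
    then have "norm (y - x) < d" "norm (y - x) \<le> e / (C + 1)" unfolding d'_def by auto
    have "norm (f y - f x - L (y - x)) \<le> (C * norm (y - x)) * norm (y - x)"
      using assms(4) \<open>norm (y - x) < d\<close> by (simp add: power2_eq_square mult.assoc)
    also have "\<dots> \<le> e * norm (y - x)"
    proof (rule mult_right_mono)
      have "C * norm (y - x) \<le> (C + 1) * (e / (C + 1))"
        using \<open>norm (y - x) \<le> e / (C + 1)\<close> assms(3) by (intro mult_mono) auto
      then show "C * norm (y - x) \<le> e" using assms(3) by simp
    qed simp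
    finally show "norm (f y - f x - L (y - x)) \<le> e * norm (y - x)" .
  qed
qed

lemma min_square_abs_eq:
  fixes d :: real
  shows "\<bar>d\<bar> \<le> 1 \<Longrightarrow> min (d^2) \<bar>d\<bar> = d^2" and "\<bar>d\<bar> \<ge> 1 \<Longrightarrow> min (d^2) \<bar>d\<bar> = \<bar>d\<bar>"
proof -
  have sq: "d^2 = \<bar>d\<bar> * \<bar>d\<bar>" by (simp add: power2_eq_square)
  show "min (d^2) \<bar>d\<bar> = d^2" if "\<bar>d\<bar> \<le> 1"
    unfolding sq by (rule min.absorb1) (use that in \<open>intro mult_left_le_one_le, auto\<close>)
  show "min (d^2) \<bar>d\<bar> = \<bar>d\<bar>" if "\<bar>d\<bar> \<ge> 1"
    unfolding sq by (rule min.absorb2) (use mult_left_mono[OF that, of "\<bar>d\<bar>"] in simp)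
qed

lemma linear_minus_huber_le:
  fixes d e m :: real
  assumes "m > 0" "\<bar>e\<bar> \<le> m"
  shows "d * e - m * min (d^2) \<bar>d\<bar> \<le> e^2 / (4*m)"
proof (cases "\<bar>d\<bar> \<le> 1")
  case True
  then show ?thesis using linear_minus_square_le[OF assms(1), of e d]
    by (simp add: min_square_abs_eq(1) mult.commute)
next
  case False
  have "d * e \<le> \<bar>d\<bar> * \<bar>e\<bar>" by (metis abs_ge_self abs_mult)
  also have "\<dots> \<le> \<bar>d\<bar> * m" using assms(2) by (intro mult_left_mono) auto
  finally have "d * e \<le> m * \<bar>d\<bar>" by (simp add: mult.commute)
  moreover have "e^2 / (4*m) \<ge> 0" using assms(1) by simp
  ultimately show ?thesis using False by (simp add: min_square_abs_eq(2))
qed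

lemma aligned_norm_minus_inner_le:
  fixes \<theta> x0 h :: "'a::real_inner"
  assumes cs: "inner \<theta> x0 = norm \<theta> * norm x0" and r: "norm x0 = r" "r > 0" and h: "norm h \<le> r/2"
  shows "norm \<theta> * norm (x0 + h) - inner \<theta> (x0 + h) \<le> norm \<theta> * (norm h)^2 / r"
proof (cases "\<theta> = 0")
  case True then show ?thesis by simp
next
  case False
  define \<sigma> where "\<sigma> = norm \<theta>"
  have sp: "\<sigma> > 0" using False \<sigma>_def by simp
  define p where "p = inner \<theta> h / \<sigma>"
  define N where "N = norm (x0 + h)"
  have "norm \<theta> *\<^sub>R x0 = norm x0 *\<^sub>R \<theta>" using cs by (simp only: norm_cauchy_schwarz_eq[symmetric])
  then have aligned: "\<sigma> *\<^sub>R x0 = r *\<^sub>R \<theta>" using r unfolding \<sigma>_def by simp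
  have "\<sigma> * inner x0 h = r * inner \<theta> h"
    by (metis aligned inner_scaleR_left)
  then have xh: "inner x0 h = r * p" unfolding p_def using sp by (simp add: field_simps)
  have pb: "\<bar>p\<bar> \<le> norm h"
    unfolding p_def \<sigma>_def using Cauchy_Schwarz_ineq2[of \<theta> h] sp \<sigma>_def by (simp add: field_simps abs_divide)
  have "N^2 = inner x0 x0 + 2*inner x0 h + inner h h"
    unfolding N_def by (simp add: power2_norm_eq_inner inner_add_left inner_add_right inner_commute)
  then have N2: "N^2 = r^2 + 2*r*p + (norm h)^2"
    using xh r(1) by (simp flip: power2_norm_eq_inner)
  have "N \<ge> r - norm h" unfolding N_def using norm_triangle_ineq2[of x0 "-h"] r by simp
  then have Nr: "N + (r + p) \<ge> r" using pb h by linarith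
  have gap: "N - (r + p) \<le> (norm h)^2 / r"
  proof (cases "N - (r + p) \<le> 0")
    case True then show ?thesis using r by (smt (verit) divide_nonneg_pos zero_le_power2)
  next
    case False
    have "(N - (r + p)) * r \<le> (N - (r + p)) * (N + (r + p))"
      using Nr False by (intro mult_left_mono) auto
    also have "\<dots> = N^2 - (r+p)^2" by (simp add: power2_eq_square algebra_simps)
    also have "\<dots> \<le> (norm h)^2" unfolding N2 by (simp add: power2_eq_square algebra_simps)
    finally show ?thesis using r by (simp add: field_simps)
  qed
  have "inner \<theta> (x0 + h) = \<sigma> * (r + p)"
    using cs r sp unfolding p_def \<sigma>_def by (simp add: inner_add_right field_simps)
  moreover have "\<sigma> * (N - (r + p)) \<le> \<sigma> * ((norm h)^2 / r)" using gap sp by (intro mult_left_mono) auto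
  ultimately show ?thesis unfolding N_def \<sigma>_def by (simp add: algebra_simps)
qed

section \<open>The quadratic maximisation inside \<open>\<psi>\<^sup>*\<close>\<close>

text \<open>Throughout, the parameter \<open>S2\<close> stands for \<open>S\<^sup>2\<close>.\<close>

definition quad_argmax :: "real \<Rightarrow> real \<Rightarrow> real" where
  "quad_argmax S2 \<sigma> = max (-1/2) (min (1/2) (\<sigma> / (2*S2)))"

definition quad_max :: "real \<Rightarrow> real \<Rightarrow> real" where
  "quad_max S2 \<sigma> = \<sigma> * quad_argmax S2 \<sigma> - (quad_argmax S2 \<sigma>)^2 * S2"

lemma quad_argmax_bounds: "-1/2 \<le> quad_argmax S2 \<sigma>" "quad_argmax S2 \<sigma> \<le> 1/2"
  by (auto simp: quad_argmax_def)

lemma quad_argmax_nonneg: "S2 > 0 \<Longrightarrow> \<sigma> \<ge> 0 \<Longrightarrow> quad_argmax S2 \<sigma> \<ge> 0"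
  by (simp add: quad_argmax_def le_max_iff_disj)

lemma quad_argmax_pos: "S2 > 0 \<Longrightarrow> \<sigma> > 0 \<Longrightarrow> quad_argmax S2 \<sigma> > 0"
  by (simp add: quad_argmax_def less_max_iff_disj)

lemma quad_argmax_zero [simp]: "quad_argmax S2 0 = 0"
  by (simp add: quad_argmax_def)

lemma quad_max_zero [simp]: "quad_max S2 0 = 0"
  by (simp add: quad_max_def)

lemma quad_objective_le_quad_max:
  assumes "S2 > 0" "-1/2 \<le> \<beta>" "\<beta> \<le> 1/2"
  shows "\<sigma>*\<beta> - \<beta>^2 * S2 \<le> quad_max S2 \<sigma> - S2 * (\<beta> - quad_argmax S2 \<sigma>)^2"
proof -
  consider "\<sigma> / (2*S2) \<le> -1/2" | "\<sigma> / (2*S2) \<ge> 1/2" | "-1/2 < \<sigma> / (2*S2)" "\<sigma> / (2*S2) < 1/2"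
    by linarith
  then show ?thesis
  proof cases
    case 1
    then have c: "quad_argmax S2 \<sigma> = -1/2" by (auto simp: quad_argmax_def)
    from 1 assms have "\<sigma> \<le> - S2" by (simp add: field_simps)
    have "(\<sigma> + S2)*(\<beta> + 1/2) \<le> 0"
      by (rule mult_nonpos_nonneg) (use assms \<open>\<sigma> \<le> - S2\<close> in auto)
    moreover have "quad_max S2 \<sigma> - S2 * (\<beta> - quad_argmax S2 \<sigma>)^2 - (\<sigma>*\<beta> - \<beta>^2 * S2)
        = -((\<sigma> + S2)*(\<beta> + 1/2))"
      unfolding quad_max_def c by (simp add: power2_eq_square field_simps)
    ultimately show ?thesis by linarith
  next
    case 2
    then have c: "quad_argmax S2 \<sigma> = 1/2" by (auto simp: quad_argmax_def)
    from 2 assms have "\<sigma> \<ge> S2" by (simp add: field_simps)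
    have "(\<sigma> - S2)*(\<beta> - 1/2) \<le> 0"
      by (rule mult_nonneg_nonpos) (use assms \<open>\<sigma> \<ge> S2\<close> in auto)
    moreover have "quad_max S2 \<sigma> - S2 * (\<beta> - quad_argmax S2 \<sigma>)^2 - (\<sigma>*\<beta> - \<beta>^2 * S2)
        = -((\<sigma> - S2)*(\<beta> - 1/2))"
      unfolding quad_max_def c by (simp add: power2_eq_square field_simps)
    ultimately show ?thesis by linarith
  next
    case 3
    then have "quad_argmax S2 \<sigma> = \<sigma> / (2*S2)" by (auto simp: quad_argmax_def)
    then have s: "\<sigma> = 2 * S2 * quad_argmax S2 \<sigma>" using assms by simp
    show ?thesis unfolding quad_max_def by (subst (1 2) s) (simp add: power2_eq_square algebra_simps)
  qed
qed

lemma SUP_quad_objective: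
  assumes "S2 > 0"
  shows "(SUP \<beta>\<in>{-1/2..1/2}. \<sigma> * \<beta> - \<beta>^2 * S2) = quad_max S2 \<sigma>"
proof (rule cSup_eq_maximum)
  show "quad_max S2 \<sigma> \<in> (\<lambda>\<beta>. \<sigma> * \<beta> - \<beta>^2 * S2) ` {-1/2..1/2}"
    unfolding quad_max_def using quad_argmax_bounds by auto
  fix x assume "x \<in> (\<lambda>\<beta>. \<sigma> * \<beta> - \<beta>^2 * S2) ` {-1/2..1/2}"
  then obtain \<beta> where b: "-1/2 \<le> \<beta>" "\<beta> \<le> 1/2" "x = \<sigma> * \<beta> - \<beta>^2 * S2" by auto
  have "S2 * (\<beta> - quad_argmax S2 \<sigma>)^2 \<ge> 0" using assms by simp
  with quad_objective_le_quad_max[OF assms b(1,2), of \<sigma>] b(3) show "x \<le> quad_max S2 \<sigma>"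
    by linarith
qed

lemma quad_max_subgradient:
  assumes "S2 > 0"
  shows "quad_max S2 \<tau> \<ge> quad_max S2 \<sigma> + quad_argmax S2 \<sigma> * (\<tau> - \<sigma>)"
proof -
  have "\<tau> * quad_argmax S2 \<sigma> - (quad_argmax S2 \<sigma>)^2 * S2
      \<le> quad_max S2 \<tau> - S2 * (quad_argmax S2 \<sigma> - quad_argmax S2 \<tau>)^2"
    using quad_objective_le_quad_max[OF assms quad_argmax_bounds] .
  moreover have "S2 * (quad_argmax S2 \<sigma> - quad_argmax S2 \<tau>)^2 \<ge> 0" using assms by simp
  ultimately show ?thesis unfolding quad_max_def by (simp add: algebra_simps)
qed

lemma quad_max_smooth:
  assumes "S2 > 0"
  shows "quad_max S2 \<tau> \<le> quad_max S2 \<sigma> + quad_argmax S2 \<sigma> * (\<tau> - \<sigma>) + (\<tau> - \<sigma>)^2 / (4*S2)"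
proof -
  define D where "D = quad_argmax S2 \<tau> - quad_argmax S2 \<sigma>"
  have max: "\<sigma> * quad_argmax S2 \<tau> - (quad_argmax S2 \<tau>)^2 * S2 \<le> quad_max S2 \<sigma> - S2 * D^2"
    using quad_objective_le_quad_max[OF assms quad_argmax_bounds] unfolding D_def .
  have amgm: "(\<tau> - \<sigma>) * D - S2 * D^2 \<le> (\<tau> - \<sigma>)^2 / (4*S2)"
    by (rule linear_minus_square_le[OF assms])
  have "quad_max S2 \<tau> = \<sigma> * quad_argmax S2 \<tau> - (quad_argmax S2 \<tau>)^2 * S2
      + (\<tau> - \<sigma>) * (quad_argmax S2 \<sigma> + D)"
    unfolding quad_max_def D_def by (simp add: algebra_simps)
  with max amgm show ?thesis by (simp add: algebra_simps)
qed

lemma quad_max_ge_abs: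
  assumes "S2 > 0"
  shows "quad_max S2 \<tau> \<ge> \<bar>\<tau>\<bar>/2 - S2/4"
proof -
  define \<beta> where "\<beta> = (if \<tau> \<ge> 0 then 1/2 else -1/2::real)"
  have "\<tau> * \<beta> - \<beta>^2 * S2 \<le> quad_max S2 \<tau> - S2 * (\<beta> - quad_argmax S2 \<tau>)^2"
    by (rule quad_objective_le_quad_max[OF assms]) (auto simp: \<beta>_def)
  moreover have "S2 * (\<beta> - quad_argmax S2 \<tau>)^2 \<ge> 0" using assms by simp
  moreover have "\<tau> * \<beta> - \<beta>^2 * S2 = \<bar>\<tau>\<bar>/2 - S2/4" by (auto simp: \<beta>_def power2_eq_square)
  ultimately show ?thesis by linarith
qed

lemma quad_max_le_abs:
  assumes "S2 > 0"
  shows "quad_max S2 \<tau> \<le> \<bar>\<tau>\<bar>/2"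
proof -
  have "\<tau> * quad_argmax S2 \<tau> \<le> \<bar>\<tau>\<bar> * \<bar>quad_argmax S2 \<tau>\<bar>" by (metis abs_ge_self abs_mult)
  also have "\<dots> \<le> \<bar>\<tau>\<bar> * (1/2)"
    using quad_argmax_bounds[of S2 \<tau>] by (intro mult_left_mono) auto
  finally have "\<tau> * quad_argmax S2 \<tau> \<le> \<bar>\<tau>\<bar>/2" by simp
  moreover have "(quad_argmax S2 \<tau>)^2 * S2 \<ge> 0" using assms by simp
  ultimately show ?thesis unfolding quad_max_def by linarith
qed

lemma quad_max_interior:
  assumes "S2 > 0" "\<sigma> \<ge> 0" "quad_argmax S2 \<sigma> < 1/2"
  shows "quad_max S2 \<sigma> = S2 * (quad_argmax S2 \<sigma>)^2"
proof -
  have "\<sigma>/(2*S2) \<ge> 0" using assms by simp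
  then have "quad_argmax S2 \<sigma> = \<sigma>/(2*S2)"
    using assms(3) unfolding quad_argmax_def by (auto simp: max_def min_def)
  then have "\<sigma> = 2*S2*quad_argmax S2 \<sigma>" using assms by simp
  then show ?thesis unfolding quad_max_def by (simp add: power2_eq_square algebra_simps)
qed

lemma quad_max_antimono:
  assumes "0 < S2" "S2 \<le> S2'"
  shows "quad_max S2' \<sigma> \<le> quad_max S2 \<sigma>"
proof -
  have "\<sigma> * quad_argmax S2' \<sigma> - (quad_argmax S2' \<sigma>)^2 * S2
      \<le> quad_max S2 \<sigma> - S2 * (quad_argmax S2' \<sigma> - quad_argmax S2 \<sigma>)^2"
    by (rule quad_objective_le_quad_max[OF assms(1) quad_argmax_bounds])
  moreover have "S2 * (quad_argmax S2' \<sigma> - quad_argmax S2 \<sigma>)^2 \<ge> 0" using assms by simp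
  moreover have "(quad_argmax S2' \<sigma>)^2 * S2 \<le> (quad_argmax S2' \<sigma>)^2 * S2'"
    using assms by (intro mult_left_mono) auto
  ultimately show ?thesis unfolding quad_max_def[of S2'] by linarith
qed

definition ball_argmax :: "real \<Rightarrow> 'a::real_inner \<Rightarrow> 'a" where
  "ball_argmax S2 \<theta> = (quad_argmax S2 (norm \<theta>) / norm \<theta>) *\<^sub>R \<theta>"

lemma norm_ball_argmax: "S2 > 0 \<Longrightarrow> norm (ball_argmax S2 \<theta>) = quad_argmax S2 (norm \<theta>)"
  unfolding ball_argmax_def using quad_argmax_nonneg[of S2 "norm \<theta>"]
  by (cases "\<theta> = 0") auto

lemma inner_ball_argmax: "inner \<theta> (ball_argmax S2 \<theta>) = norm \<theta> * quad_argmax S2 (norm \<theta>)"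
  unfolding ball_argmax_def
  by (cases "\<theta> = 0") (auto simp: power2_norm_eq_inner[symmetric] power2_eq_square)

lemma power2_norm_diff_scaleR:
  fixes b \<theta> :: "'a::real_inner"
  shows "(norm (b - k *\<^sub>R \<theta>))^2 = (norm b)^2 - 2*k*inner \<theta> b + k^2 * (norm \<theta>)^2"
  unfolding power2_norm_eq_inner
  by (simp add: inner_diff_left inner_diff_right inner_commute algebra_simps power2_eq_square)

lemma ball_objective_le_quad_max:
  fixes \<theta> b :: "'a::real_inner"
  assumes "S2 > 0" "norm b \<le> 1/2"
  shows "inner \<theta> b - S2 * (norm b)^2 \<le> quad_max S2 (norm \<theta>) - S2 * (norm (b - ball_argmax S2 \<theta>))^2"
proof (cases "\<theta> = 0")
  case True
  then show ?thesis by (simp add: ball_argmax_def quad_max_def)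
next
  case False
  define \<sigma> where "\<sigma> = norm \<theta>"
  define p where "p = inner \<theta> b"
  have sp: "\<sigma> > 0" using False \<sigma>_def by simp
  have pb: "p \<le> \<sigma> / 2"
  proof -
    have "p \<le> \<sigma> * norm b" unfolding p_def \<sigma>_def by (metis norm_cauchy_schwarz)
    also have "\<dots> \<le> \<sigma> * (1/2)" using assms(2) sp by (intro mult_left_mono) auto
    finally show ?thesis by simp
  qed
  have e: "(norm (b - ball_argmax S2 \<theta>))^2 = (norm b)^2 - 2*(quad_argmax S2 \<sigma> / \<sigma>)*p + (quad_argmax S2 \<sigma> / \<sigma>)^2 * \<sigma>^2"
    unfolding ball_argmax_def p_def \<sigma>_def by (rule power2_norm_diff_scaleR)
  show ?thesis
  proof (cases "\<sigma> \<le> S2")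
    case True
    then have c: "quad_argmax S2 \<sigma> = \<sigma> / (2*S2)" using sp assms by (auto simp: quad_argmax_def field_simps)
    have "quad_max S2 \<sigma> - S2 * (norm (b - ball_argmax S2 \<theta>))^2 = p - S2 * (norm b)^2"
      unfolding e quad_max_def c using sp assms by (simp add: field_simps power2_eq_square)
    then have "p - S2 * (norm b)^2 \<le> quad_max S2 \<sigma> - S2 * (norm (b - ball_argmax S2 \<theta>))^2" by simp
    then show ?thesis unfolding p_def \<sigma>_def by simp
  next
    case False
    then have c: "quad_argmax S2 \<sigma> = 1/2" using sp assms by (auto simp: quad_argmax_def field_simps)
    have h: "quad_max S2 \<sigma> = \<sigma>/2 - S2/4" unfolding quad_max_def c by (simp add: power2_eq_square)
    have "p * (\<sigma> - S2) \<le> \<sigma>/2 * (\<sigma> - S2)" using pb False by (intro mult_right_mono) auto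
    then have "p - S2 * (norm b)^2 \<le> \<sigma>/2 - S2/4 - S2 * ((norm b)^2 - 2*(1/2/\<sigma>)*p + (1/2/\<sigma>)^2*\<sigma>^2)"
      using sp by (simp add: field_simps power2_eq_square)
    then have "p - S2 * (norm b)^2 \<le> quad_max S2 \<sigma> - S2 * (norm (b - ball_argmax S2 \<theta>))^2"
      unfolding e h c by simp
    then show ?thesis unfolding p_def \<sigma>_def by simp
  qed
qed

lemma quad_max_norm_diff_le:
  fixes \<theta> l :: "'a::real_inner"
  assumes "S2 > 0"
  shows "quad_max S2 (norm (\<theta> - l)) \<le> quad_max S2 (norm \<theta>) - inner l (ball_argmax S2 \<theta>) + (norm l)^2 / (4*S2)"
proof -
  define b' where "b' = ball_argmax S2 (\<theta> - l)"
  define \<delta> where "\<delta> = b' - ball_argmax S2 \<theta>"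
  have nb: "norm b' \<le> 1/2" unfolding b'_def using norm_ball_argmax[OF assms] quad_argmax_bounds by metis
  have h': "quad_max S2 (norm (\<theta> - l)) = inner (\<theta> - l) b' - S2 * (norm b')^2"
    unfolding b'_def inner_ball_argmax norm_ball_argmax[OF assms] quad_max_def by (simp add: algebra_simps)
  have m: "inner \<theta> b' - S2 * (norm b')^2 \<le> quad_max S2 (norm \<theta>) - S2 * (norm \<delta>)^2"
    unfolding \<delta>_def by (rule ball_objective_le_quad_max[OF assms nb])
  have q: "- inner l \<delta> - S2 * (norm \<delta>)^2 \<le> (norm l)^2 / (4*S2)"
  proof -
    have "- inner l \<delta> \<le> norm l * norm \<delta>" using norm_cauchy_schwarz[of "-l" \<delta>] by simp
    moreover have "norm l * norm \<delta> - S2 * (norm \<delta>)^2 \<le> (norm l)^2 / (4*S2)"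
      by (rule linear_minus_square_le[OF assms])
    ultimately show ?thesis by linarith
  qed
  have "inner l b' = inner l (ball_argmax S2 \<theta>) + inner l \<delta>" unfolding \<delta>_def by (simp add: inner_diff_right)
  with h' m q show ?thesis by (simp add: inner_diff_left)
qed
section \<open>The dual potential \<open>\<psi>\<^sup>*\<close>\<close>

definition psi_star_sq :: "real \<Rightarrow> real \<Rightarrow> real \<Rightarrow> real" where
  "psi_star_sq S2 Q \<tau> = exp (quad_max S2 \<tau> - Q)"

lemma psi_star_eq_psi_star_sq: "S \<noteq> 0 \<Longrightarrow> psi_star \<tau> S Q = psi_star_sq (S^2) Q \<tau>"
  unfolding psi_star_sq_def psi_star_def using SUP_quad_objective[of "S^2" \<tau>] by simp

lemma psi_star_sq_pos: "psi_star_sq S2 Q \<tau> > 0"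
  unfolding psi_star_sq_def by simp

lemma psi_star_sq_antimono:
  assumes "0 < S2" "S2 \<le> S2'" "Q \<le> Q'"
  shows "psi_star_sq S2' Q' \<sigma> \<le> psi_star_sq S2 Q \<sigma>"
  unfolding psi_star_sq_def using quad_max_antimono[OF assms(1,2), of \<sigma>] assms(3) by simp

lemma psi_star_sq_subgradient:
  assumes "S2 > 0"
  shows "psi_star_sq S2 Q \<tau> \<ge> psi_star_sq S2 Q \<sigma> + psi_star_sq S2 Q \<sigma> * quad_argmax S2 \<sigma> * (\<tau> - \<sigma>)"
proof -
  have "psi_star_sq S2 Q \<sigma> * (1 + quad_argmax S2 \<sigma> * (\<tau> - \<sigma>))
      \<le> psi_star_sq S2 Q \<sigma> * exp (quad_max S2 \<tau> - quad_max S2 \<sigma>)"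
    using quad_max_subgradient[OF assms, of \<sigma> \<tau>] psi_star_sq_pos[of S2 Q \<sigma>]
    by (intro mult_left_mono order_trans[OF _ exp_ge_add_one_self]) auto
  also have "\<dots> = psi_star_sq S2 Q \<tau>" unfolding psi_star_sq_def by (simp add: mult_exp_exp)
  finally show ?thesis by (simp add: algebra_simps)
qed

lemma quad_max_has_real_derivative:
  assumes "S2 > 0"
  shows "(quad_max S2 has_real_derivative quad_argmax S2 \<sigma>) (at \<sigma>)"
  unfolding has_field_derivative_def
proof (rule has_derivative_quadratic_remainder[where d=1 and C="1/(4*S2)"])
  fix y
  show "\<bar>quad_max S2 y - quad_max S2 \<sigma> - quad_argmax S2 \<sigma> * (y - \<sigma>)\<bar> \<le> 1/(4*S2) * (norm (y - \<sigma>))^2"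
    using quad_max_subgradient[OF assms, of \<sigma> y] quad_max_smooth[OF assms, of y \<sigma>] by simp
qed (use assms bounded_linear_mult_right in auto)

lemma psi_star_sq_has_real_derivative:
  assumes "S2 > 0"
  shows "(psi_star_sq S2 Q has_real_derivative psi_star_sq S2 Q \<sigma> * quad_argmax S2 \<sigma>) (at \<sigma>)"
  unfolding psi_star_sq_def
  by (rule derivative_eq_intros quad_max_has_real_derivative[OF assms] | simp)+

text \<open>At \<open>\<sigma> = 0\<close> the argmax vanishes, and the curvature of \<open>psi_star_sq\<close> comes from the
  quadratic part of \<open>quad_max\<close> instead.\<close>

definition curv_modulus :: "real \<Rightarrow> real \<Rightarrow> real \<Rightarrow> real" where
  "curv_modulus S2 Q \<sigma> =
     (if \<sigma> = 0 then psi_star_sq S2 Q \<sigma> / (4*S2) else psi_star_sq S2 Q \<sigma> * (quad_argmax S2 \<sigma>)^2 / 4)"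

lemma curv_modulus_pos: "S2 > 0 \<Longrightarrow> \<sigma> \<ge> 0 \<Longrightarrow> curv_modulus S2 Q \<sigma> > 0"
  unfolding curv_modulus_def using psi_star_sq_pos[of S2 Q \<sigma>] quad_argmax_pos[of S2 \<sigma>] by auto

lemma psi_star_sq_local_growth:
  assumes S2: "S2 \<ge> 1" and "\<sigma> \<ge> 0" and d: "\<bar>d\<bar> \<le> 1"
  shows "psi_star_sq S2 Q (\<sigma> + d) \<ge>
    psi_star_sq S2 Q \<sigma> + psi_star_sq S2 Q \<sigma> * quad_argmax S2 \<sigma> * d + curv_modulus S2 Q \<sigma> * d^2"
proof -
  have S2p: "S2 > 0" using S2 by simp
  define F where "F = psi_star_sq S2 Q \<sigma>"
  define c where "c = quad_argmax S2 \<sigma>"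
  have F: "F > 0" unfolding F_def by (rule psi_star_sq_pos)
  have shift: "psi_star_sq S2 Q (\<sigma> + d) = F * exp (quad_max S2 (\<sigma> + d) - quad_max S2 \<sigma>)"
    unfolding F_def psi_star_sq_def by (simp add: mult_exp_exp)
  show ?thesis
  proof (cases "\<sigma> = 0")
    case True
    have "\<bar>d\<bar> \<le> S2" using d S2 by linarith
    then have "\<bar>d/(2*S2)\<bar> \<le> 1/2" using S2p by (simp add: abs_divide)
    then have "d * (d/(2*S2)) - (d/(2*S2))^2 * S2 \<le> quad_max S2 d - S2 * (d/(2*S2) - quad_argmax S2 d)^2"
      by (intro quad_objective_le_quad_max[OF S2p]) linarith+
    moreover have "d * (d/(2*S2)) - (d/(2*S2))^2 * S2 = d^2/(4*S2)"
      using S2p by (simp add: field_simps power2_eq_square)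
    moreover have "S2 * (d/(2*S2) - quad_argmax S2 d)^2 \<ge> 0" using S2p by simp
    ultimately have "quad_max S2 d \<ge> d^2/(4*S2)" by linarith
    then have "psi_star_sq S2 Q (\<sigma> + d) \<ge> F * (1 + d^2/(4*S2))" unfolding shift using True F
      by (intro mult_left_mono) (auto intro: order_trans[OF _ exp_ge_add_one_self])
    then show ?thesis using True unfolding curv_modulus_def F_def[symmetric] by (simp add: field_simps)
  next
    case False
    have "\<bar>c\<bar> * \<bar>d\<bar> \<le> (1/2) * 1"
      using quad_argmax_bounds[of S2 \<sigma>] d unfolding c_def by (intro mult_mono) auto
    then have "\<bar>c * d\<bar> \<le> 1/2" by (simp add: abs_mult)
    then have "exp (c * d) \<ge> (1 + c*d/2)^2" by (intro exp_ge_square_half) (auto simp: abs_le_iff)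
    moreover have "exp (quad_max S2 (\<sigma> + d) - quad_max S2 \<sigma>) \<ge> exp (c * d)"
      using quad_max_subgradient[OF S2p, of \<sigma> "\<sigma>+d"] unfolding c_def by simp
    ultimately have "exp (quad_max S2 (\<sigma> + d) - quad_max S2 \<sigma>) \<ge> (1 + c*d/2)^2" by linarith
    then have "psi_star_sq S2 Q (\<sigma> + d) \<ge> F * (1 + c*d/2)^2"
      unfolding shift using F by (intro mult_left_mono) auto
    then show ?thesis using False unfolding curv_modulus_def F_def[symmetric] c_def[symmetric]
      by (simp add: power2_eq_square algebra_simps)
  qed
qed

lemma subgradient_growth_beyond:
  fixes f f' :: "real \<Rightarrow> real"
  assumes sub: "\<And>s \<tau>. f \<tau> \<ge> f s + f' s * (\<tau> - s)"
    and near: "f (\<sigma> + e) \<ge> f \<sigma> + f' \<sigma> * e + m" and t: "t \<ge> 1"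
  shows "f (\<sigma> + t * e) \<ge> f \<sigma> + f' \<sigma> * (t * e) + m * t"
proof -
  have "f \<sigma> \<ge> f (\<sigma> + e) + f' (\<sigma> + e) * (- e)" using sub[of "\<sigma> + e" \<sigma>] by simp
  with near have slope: "f' (\<sigma> + e) * e \<ge> f' \<sigma> * e + m" by linarith
  have "(f' \<sigma> * e + m) * (t - 1) \<le> (f' (\<sigma> + e) * e) * (t - 1)"
    using slope t by (intro mult_right_mono) auto
  moreover have "f (\<sigma> + t * e) \<ge> f (\<sigma> + e) + (f' (\<sigma> + e) * e) * (t - 1)"
    using sub[of "\<sigma> + e" "\<sigma> + t * e"] by (simp add: algebra_simps)
  ultimately show ?thesis using near by (simp add: algebra_simps)
qed

lemma psi_star_sq_growth:
  assumes S2: "S2 \<ge> 1" and sg: "\<sigma> \<ge> 0"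
  shows "psi_star_sq S2 Q (\<sigma> + d) \<ge> psi_star_sq S2 Q \<sigma> + psi_star_sq S2 Q \<sigma> * quad_argmax S2 \<sigma> * d
           + curv_modulus S2 Q \<sigma> * min (d^2) \<bar>d\<bar>"
proof (cases "\<bar>d\<bar> \<le> 1")
  case True
  then show ?thesis using psi_star_sq_local_growth[OF assms True] by (simp add: min_square_abs_eq(1))
next
  case False
  define e where "e = sgn d"
  have e: "\<bar>e\<bar> = 1" and d: "d = \<bar>d\<bar> * e" using False unfolding e_def by (auto simp: sgn_if)
  then have e2: "e^2 = 1" by (metis abs_mult_self_eq mult_1 power2_eq_square)
  have "psi_star_sq S2 Q (\<sigma> + \<bar>d\<bar> * e) \<ge> psi_star_sq S2 Q \<sigma>
      + psi_star_sq S2 Q \<sigma> * quad_argmax S2 \<sigma> * (\<bar>d\<bar> * e) + curv_modulus S2 Q \<sigma> * \<bar>d\<bar>"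
  proof (rule subgradient_growth_beyond[where f = "psi_star_sq S2 Q", simplified mult.assoc])
    show "psi_star_sq S2 Q \<tau> \<ge> psi_star_sq S2 Q s + psi_star_sq S2 Q s * quad_argmax S2 s * (\<tau> - s)"
      for s \<tau> using psi_star_sq_subgradient[of S2 Q s \<tau>] S2 by simp
    show "psi_star_sq S2 Q (\<sigma> + e) \<ge> psi_star_sq S2 Q \<sigma> + psi_star_sq S2 Q \<sigma> * quad_argmax S2 \<sigma> * e
        + curv_modulus S2 Q \<sigma>"
      using psi_star_sq_local_growth[OF assms, of e Q] e e2 by simp
  qed (use False in simp)
  then show ?thesis using False d by (simp add: min_square_abs_eq(2) mult.assoc)
qed

section \<open>The potential \<open>\<psi>\<close> and its minimiser against a linear function\<close>

lemma bdd_above_psi_objective: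
  assumes "S \<noteq> 0"
  shows "bdd_above (range (\<lambda>\<theta>. \<theta> * r - psi_star \<theta> S Q))"
proof (rule bdd_aboveI2)
  fix \<theta> :: real
  define A where "A = exp (-(S^2)/4 - Q)"
  have A: "A > 0" unfolding A_def by simp
  have "psi_star \<theta> S Q = exp (quad_max (S^2) \<theta> - Q)"
    using psi_star_eq_psi_star_sq[OF assms] unfolding psi_star_sq_def .
  also have "\<dots> \<ge> exp (\<bar>\<theta>\<bar>/2 - S^2/4 - Q)" using quad_max_ge_abs[of "S^2" \<theta>] assms by simp
  also have "exp (\<bar>\<theta>\<bar>/2 - S^2/4 - Q) = A * exp (\<bar>\<theta>\<bar>/2)"
    unfolding A_def by (simp add: mult_exp_exp algebra_simps)
  also have "A * exp (\<bar>\<theta>\<bar>/2) \<ge> A/16 * \<theta>^2"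
    using exp_half_ge_square[of "\<bar>\<theta>\<bar>"] A by simp
  finally have "\<theta> * r - psi_star \<theta> S Q \<le> r * \<theta> - A/16 * \<theta>^2" by simp
  also have "\<dots> \<le> r^2 / (4 * (A/16))" by (rule linear_minus_square_le) (use A in simp)
  finally show "\<theta> * r - psi_star \<theta> S Q \<le> r^2 / (4 * (A/16))" .
qed

lemma fenchel_young_psi:
  assumes "S \<noteq> 0"
  shows "psi r S Q \<ge> \<tau> * r - psi_star_sq (S^2) Q \<tau>"
proof -
  have "\<tau> * r - psi_star \<tau> S Q \<le> psi r S Q"
    unfolding psi_def by (rule cSUP_upper[OF _ bdd_above_psi_objective[OF assms]]) simp
  then show ?thesis using psi_star_eq_psi_star_sq[OF assms] by simp
qed

lemma psi_eq_dual:
  assumes "S \<noteq> 0" "r = psi_star_sq (S^2) Q \<sigma> * quad_argmax (S^2) \<sigma>"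
  shows "psi r S Q = \<sigma> * r - psi_star_sq (S^2) Q \<sigma>"
  unfolding psi_def
proof (rule cSup_eq_maximum)
  show "\<sigma> * r - psi_star_sq (S^2) Q \<sigma> \<in> range (\<lambda>\<theta>. \<theta> * r - psi_star \<theta> S Q)"
    using psi_star_eq_psi_star_sq[OF assms(1)] by auto
  fix x assume "x \<in> range (\<lambda>\<theta>. \<theta> * r - psi_star \<theta> S Q)"
  then obtain \<tau> where x: "x = \<tau> * r - psi_star_sq (S^2) Q \<tau>"
    using psi_star_eq_psi_star_sq[OF assms(1)] by auto
  have "psi_star_sq (S^2) Q \<tau> \<ge> psi_star_sq (S^2) Q \<sigma> + r * (\<tau> - \<sigma>)"
    using psi_star_sq_subgradient[of "S^2" Q \<sigma> \<tau>] assms by simp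
  then show "x \<le> \<sigma> * r - psi_star_sq (S^2) Q \<sigma>" unfolding x by (simp add: algebra_simps)
qed

lemma psi_eq_dual_imp:
  assumes "S \<noteq> 0" "psi r S Q = \<sigma> * r - psi_star_sq (S^2) Q \<sigma>"
  shows "r = psi_star_sq (S^2) Q \<sigma> * quad_argmax (S^2) \<sigma>"
proof -
  have S2: "S^2 > 0" using assms by simp
  have "((\<lambda>\<tau>. \<tau> * r - psi_star_sq (S^2) Q \<tau>) has_real_derivative
          (r - psi_star_sq (S^2) Q \<sigma> * quad_argmax (S^2) \<sigma>)) (at \<sigma>)"
    by (rule derivative_eq_intros psi_star_sq_has_real_derivative[OF S2] | simp)+
  moreover have "\<tau> * r - psi_star_sq (S^2) Q \<tau> \<le> \<sigma> * r - psi_star_sq (S^2) Q \<sigma>" for \<tau>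
    using fenchel_young_psi[OF assms(1), where r=r and Q=Q and \<tau>=\<tau>] assms(2) by linarith
  ultimately have "r - psi_star_sq (S^2) Q \<sigma> * quad_argmax (S^2) \<sigma> = 0"
    by (intro DERIV_local_max[of _ _ _ 1]) auto
  then show ?thesis by simp
qed

lemma psi_smooth_at_dual:
  assumes S: "S \<noteq> 0" "S^2 \<ge> 1" and sg: "\<sigma> \<ge> 0"
    and r: "r = psi_star_sq (S^2) Q \<sigma> * quad_argmax (S^2) \<sigma>"
    and r': "\<bar>r' - r\<bar> \<le> curv_modulus (S^2) Q \<sigma>"
  shows "psi r' S Q \<le> psi r S Q + \<sigma> * (r' - r) + (r' - r)^2 / (4 * curv_modulus (S^2) Q \<sigma>)"
proof -
  define m where "m = curv_modulus (S^2) Q \<sigma>"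
  define F where "F = psi_star_sq (S^2) Q \<sigma>"
  have m: "m > 0" unfolding m_def using curv_modulus_pos[of "S^2" \<sigma> Q] S sg by simp
  have "psi r' S Q \<le> \<sigma> * r - F + \<sigma> * (r' - r) + (r' - r)^2 / (4 * m)"
    unfolding psi_def
  proof (rule cSUP_least)
    fix \<tau> :: real
    have "psi_star_sq (S^2) Q \<tau> \<ge> F + r * (\<tau> - \<sigma>) + m * min ((\<tau> - \<sigma>)^2) \<bar>\<tau> - \<sigma>\<bar>"
      using psi_star_sq_growth[OF S(2) sg, of Q "\<tau> - \<sigma>"] unfolding F_def m_def r by simp
    moreover have "(\<tau> - \<sigma>) * (r' - r) - m * min ((\<tau> - \<sigma>)^2) \<bar>\<tau> - \<sigma>\<bar> \<le> (r' - r)^2 / (4*m)"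
      using linear_minus_huber_le[OF m, of "r' - r" "\<tau> - \<sigma>"] r' unfolding m_def by simp
    ultimately show "\<tau> * r' - psi_star \<tau> S Q \<le> \<sigma> * r - F + \<sigma> * (r' - r) + (r' - r)^2 / (4 * m)"
      using psi_star_eq_psi_star_sq[OF S(1)] by (simp add: algebra_simps)
  qed simp
  then show ?thesis using psi_eq_dual[OF S(1) r] unfolding m_def F_def by simp
qed

definition psi_minimizer :: "real \<Rightarrow> real \<Rightarrow> 'a::real_inner \<Rightarrow> 'a" where
  "psi_minimizer S2 Q \<theta> = psi_star_sq S2 Q (norm \<theta>) *\<^sub>R ball_argmax S2 \<theta>"

lemma norm_psi_minimizer:
  "S2 > 0 \<Longrightarrow> norm (psi_minimizer S2 Q \<theta>) = psi_star_sq S2 Q (norm \<theta>) * quad_argmax S2 (norm \<theta>)"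
  unfolding psi_minimizer_def using psi_star_sq_pos[of S2 Q "norm \<theta>"] by (simp add: norm_ball_argmax)

lemma inner_psi_minimizer:
  "inner \<theta> (psi_minimizer S2 Q \<theta>) = norm \<theta> * (psi_star_sq S2 Q (norm \<theta>) * quad_argmax S2 (norm \<theta>))"
  unfolding psi_minimizer_def by (simp add: inner_ball_argmax)

lemma psi_norm_psi_minimizer:
  assumes "S \<noteq> 0"
  shows "psi (norm (psi_minimizer (S^2) Q \<theta>)) S Q
       = inner \<theta> (psi_minimizer (S^2) Q \<theta>) - psi_star_sq (S^2) Q (norm \<theta>)"
  using psi_eq_dual[OF assms norm_psi_minimizer] assms
  by (simp add: inner_psi_minimizer norm_psi_minimizer)

lemma psi_objective_lower:
  fixes \<theta> y :: "'a::real_inner"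
  assumes "S \<noteq> 0"
  shows "psi (norm y) S Q - inner \<theta> y \<ge> - psi_star_sq (S^2) Q (norm \<theta>)"
  using fenchel_young_psi[OF assms, where r="norm y" and \<tau>="norm \<theta>" and Q=Q]
    norm_cauchy_schwarz[of \<theta> y] by linarith

lemma psi_minimizer_unique:
  fixes \<theta> x :: "'a::real_inner"
  assumes "S \<noteq> 0" "psi (norm x) S Q - inner \<theta> x \<le> - psi_star_sq (S^2) Q (norm \<theta>)"
  shows "x = psi_minimizer (S^2) Q \<theta>"
proof -
  define \<sigma> where "\<sigma> = norm \<theta>"
  have fy: "psi (norm x) S Q \<ge> \<sigma> * norm x - psi_star_sq (S^2) Q \<sigma>"
    unfolding \<sigma>_def by (rule fenchel_young_psi[OF assms(1)])
  have cs: "inner \<theta> x \<le> \<sigma> * norm x" unfolding \<sigma>_def by (rule norm_cauchy_schwarz)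
  have "psi (norm x) S Q = \<sigma> * norm x - psi_star_sq (S^2) Q \<sigma>"
    using fy cs assms(2) unfolding \<sigma>_def by linarith
  then have nx: "norm x = psi_star_sq (S^2) Q \<sigma> * quad_argmax (S^2) \<sigma>"
    by (rule psi_eq_dual_imp[OF assms(1)])
  have "inner \<theta> x = \<sigma> * norm x" using fy cs assms(2) unfolding \<sigma>_def by linarith
  then have aligned: "norm \<theta> *\<^sub>R x = norm x *\<^sub>R \<theta>" unfolding \<sigma>_def by (simp add: norm_cauchy_schwarz_eq)
  show ?thesis
  proof (cases "\<theta> = 0")
    case True
    then show ?thesis using nx \<sigma>_def by (simp add: psi_minimizer_def ball_argmax_def)
  next
    case False
    then have "\<sigma> > 0" unfolding \<sigma>_def by simp
    then have "x = (1/\<sigma>) *\<^sub>R (\<sigma> *\<^sub>R x)" by simp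
    also have "\<dots> = (norm x / \<sigma>) *\<^sub>R \<theta>" using aligned unfolding \<sigma>_def by simp
    also have "\<dots> = psi_minimizer (S^2) Q \<theta>"
      unfolding psi_minimizer_def ball_argmax_def nx \<sigma>_def by (simp add: mult.commute)
    finally show ?thesis .
  qed
qed

lemma THE_psi_minimizer:
  fixes \<theta> :: "'a::real_inner"
  assumes "S \<noteq> 0"
  shows "(THE x. \<forall>y. psi (norm x) S Q - inner \<theta> x \<le> psi (norm y) S Q - inner \<theta> y)
       = psi_minimizer (S^2) Q \<theta>"
proof (rule the_equality)
  have min: "psi (norm (psi_minimizer (S^2) Q \<theta>)) S Q - inner \<theta> (psi_minimizer (S^2) Q \<theta>)
      = - psi_star_sq (S^2) Q (norm \<theta>)"
    using psi_norm_psi_minimizer[OF assms, of Q \<theta>] by simp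
  then show "\<forall>y. psi (norm (psi_minimizer (S^2) Q \<theta>)) S Q - inner \<theta> (psi_minimizer (S^2) Q \<theta>)
      \<le> psi (norm y) S Q - inner \<theta> y"
    unfolding min by (intro allI psi_objective_lower[OF assms])
  fix x assume "\<forall>y. psi (norm x) S Q - inner \<theta> x \<le> psi (norm y) S Q - inner \<theta> y"
  then have "psi (norm x) S Q - inner \<theta> x \<le> - psi_star_sq (S^2) Q (norm \<theta>)"
    unfolding min[symmetric] by blast
  then show "x = psi_minimizer (S^2) Q \<theta>" by (rule psi_minimizer_unique[OF assms])
qed

text \<open>The radial part of the increment is controlled by the smoothness of \<open>\<psi>\<close> at the dual
  point, the angular part by \<open>aligned_norm_minus_inner_le\<close>.\<close>

lemma psi_norm_remainder_le:
  fixes \<theta> y :: "'a::real_inner" and S Q :: real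
  defines "x0 \<equiv> psi_minimizer (S^2) Q \<theta>" and "m \<equiv> curv_modulus (S^2) Q (norm \<theta>)"
  assumes S: "S \<noteq> 0" "S^2 \<ge> 1"
    and near: "norm (y - x0) \<le> m" "\<theta> \<noteq> 0 \<Longrightarrow> norm (y - x0) \<le> norm x0 / 2"
  shows "psi (norm y) S Q - psi (norm x0) S Q - inner \<theta> (y - x0)
      \<le> (1/(4*m) + norm \<theta> / norm x0) * (norm (y - x0))^2"
proof -
  define \<sigma> where "\<sigma> = norm \<theta>"
  define r where "r = norm x0"
  define h where "h = y - x0"
  have m: "m > 0" unfolding m_def using curv_modulus_pos[of "S^2" "norm \<theta>" Q] S by simp
  have S2: "S^2 > 0" using S by simp
  have r: "r = psi_star_sq (S^2) Q \<sigma> * quad_argmax (S^2) \<sigma>"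
    unfolding r_def x0_def \<sigma>_def by (rule norm_psi_minimizer[OF S2])
  have ix0: "inner \<theta> x0 = \<sigma> * r" unfolding x0_def r \<sigma>_def by (rule inner_psi_minimizer)
  have nd: "\<bar>norm y - r\<bar> \<le> norm h" unfolding h_def r_def by (rule norm_triangle_ineq3)
  then have "psi (norm y) S Q \<le> psi r S Q + \<sigma> * (norm y - r) + (norm y - r)^2 / (4 * m)"
    using near(1) unfolding m_def h_def \<sigma>_def
    by (intro psi_smooth_at_dual[OF S _ r[unfolded \<sigma>_def]]) auto
  moreover have "(norm y - r)^2 / (4*m) \<le> (norm h)^2 / (4*m)"
    using nd m by (intro divide_right_mono) (auto simp: abs_le_square_iff[symmetric])
  moreover have "\<sigma> * norm y - inner \<theta> y \<le> \<sigma> / r * (norm h)^2"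
  proof (cases "\<theta> = 0")
    case False
    have "r > 0" using False r S2 psi_star_sq_pos quad_argmax_pos unfolding \<sigma>_def by simp
    moreover have "y = x0 + h" unfolding h_def by simp
    ultimately show ?thesis
      using aligned_norm_minus_inner_le[of \<theta> x0 r h] ix0 near(2)[OF False]
      unfolding \<sigma>_def r_def h_def by simp
  qed (simp add: \<sigma>_def)
  moreover have "inner \<theta> y = \<sigma> * r + inner \<theta> h" using ix0 unfolding h_def by (simp add: inner_diff_right)
  moreover have "(1/(4*m) + \<sigma>/r) * (norm h)^2 = (norm h)^2/(4*m) + \<sigma> / r * (norm h)^2"
    by (simp add: distrib_right)
  moreover have "\<sigma> * (norm y - r) = \<sigma> * norm y - \<sigma> * r" by (simp add: algebra_simps)
  ultimately have "psi (norm y) S Q - psi r S Q - inner \<theta> h \<le> (1/(4*m) + \<sigma>/r) * (norm h)^2"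
    by linarith
  then show ?thesis unfolding r_def \<sigma>_def h_def .
qed

lemma has_derivative_psi_norm:
  fixes \<theta> :: "'a::real_inner"
  assumes S: "S \<noteq> 0" "S^2 \<ge> 1"
  shows "((\<lambda>x. psi (norm x) S Q) has_derivative (\<lambda>h. inner \<theta> h)) (at (psi_minimizer (S^2) Q \<theta>))"
proof -
  define x0 where "x0 = psi_minimizer (S^2) Q \<theta>"
  define m where "m = curv_modulus (S^2) Q (norm \<theta>)"
  define \<delta> where "\<delta> = (if \<theta> = 0 then m else min m (norm x0 / 2))"
  have S2: "S^2 > 0" using S by simp
  have m: "m > 0" unfolding m_def using curv_modulus_pos[OF S2] by simp
  have "\<theta> \<noteq> 0 \<Longrightarrow> norm x0 > 0"
    unfolding x0_def norm_psi_minimizer[OF S2] using psi_star_sq_pos quad_argmax_pos[OF S2] by simp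
  then have "\<delta> > 0" unfolding \<delta>_def using m by auto
  show ?thesis unfolding x0_def[symmetric]
  proof (rule has_derivative_quadratic_remainder[where d=\<delta> and C="1/(4*m) + norm \<theta> / norm x0"])
    fix y assume y: "norm (y - x0) < \<delta>"
    have "psi (norm y) S Q - psi (norm x0) S Q - inner \<theta> (y - x0) \<ge> 0"
      using psi_objective_lower[OF S(1), where y=y and \<theta>=\<theta> and Q=Q] psi_norm_psi_minimizer[OF S(1), of Q \<theta>]
      unfolding x0_def by (simp add: inner_diff_right)
    moreover have "psi (norm y) S Q - psi (norm x0) S Q - inner \<theta> (y - x0)
        \<le> (1/(4*m) + norm \<theta> / norm x0) * (norm (y - x0))^2"
      unfolding x0_def m_def
      by (rule psi_norm_remainder_le[OF S]) (use y in \<open>auto simp: \<delta>_def x0_def m_def split: if_splits\<close>)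
    ultimately show "\<bar>psi (norm y) S Q - psi (norm x0) S Q - inner \<theta> (y - x0)\<bar>
        \<le> (1/(4*m) + norm \<theta> / norm x0) * (norm (y - x0))^2" by simp
  qed (use \<open>\<delta> > 0\<close> m bounded_linear_inner_right in auto)
qed

lemma alg_S2_ge: "alg_S2 g \<eta> n \<ge> 4"
  by (induction n) (auto intro!: add_increasing2)

lemma alg_Q_nonneg: "alg_Q g \<eta> n \<ge> 0"
proof (induction n)
  case (Suc n)
  have "alg_S2 g \<eta> (Suc n) > 0" using alg_S2_ge[of g \<eta> "Suc n"] by linarith
  then show ?case using Suc by (simp del: alg_S2.simps)
qed simp

lemma alg_S_sq: "(alg_S g \<eta> n)^2 = alg_S2 g \<eta> n"
  unfolding alg_S_def using alg_S2_ge[of g \<eta> n] by simp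

lemma alg_S_neq_0: "alg_S g \<eta> n \<noteq> 0"
  unfolding alg_S_def using alg_S2_ge[of g \<eta> n] by simp

lemma alg_x_eq_psi_minimizer:
  assumes "t \<ge> 1"
  shows "alg_x g \<eta> t = psi_minimizer (alg_S2 g \<eta> (t-1)) (alg_Q g \<eta> (t-1)) (alg_theta g \<eta> (t-1))"
  using assms THE_psi_minimizer[OF alg_S_neq_0[of g \<eta> "t-1"], of "alg_Q g \<eta> (t-1)" "alg_theta g \<eta> (t-1)"]
  unfolding alg_x_def alg_phi_def alg_S_sq by simp

section \<open>Part (a): the iterate is controlled by the Bregman divergence\<close>

text \<open>Writing \<open>F = \<psi>\<^sup>*(\<sigma>)\<close>, \<open>c = quad_argmax S2 \<sigma>\<close> and \<open>a = \<parallel>y\<parallel>\<close>, the hypothesis on \<open>B\<close> below is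
  Fenchel--Young for \<open>\<psi>(a)\<close> at the dual point \<open>\<sigma> - \<delta>\<close> combined with the smoothness of
  \<open>quad_max\<close>; \<open>F c = \<parallel>x\<^sub>t\<parallel>\<close>.  The two regimes differ in the choice of \<open>\<delta>\<close>.\<close>

lemma minimizer_norm_sq_le_gap_small:
  fixes F c S2 a B :: real
  assumes S2: "S2 \<ge> 4" and F: "F > 0" and c: "c > 0" and a: "a \<le> F*c/2"
    and w: "S2 * c^2 \<le> 1/4" and Fw: "F \<le> exp (S2 * c^2)"
    and B: "B \<ge> F - F * exp (-c*(S2*c) + (S2*c)^2/(4*S2)) - (S2*c) * a"
  shows "(F*c)^2 \<le> (sqrt S2 + 2) * B"
proof -
  define w where "w = S2 * c^2"
  have wp: "w > 0" unfolding w_def using c S2 by simp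
  have "exp (1/4::real) * (3/4) \<le> exp (1/4) * exp (-(1/4))"
    using exp_ge_add_one_self[of "-(1/4)::real"] by (intro mult_left_mono) auto
  then have "exp (1/4::real) \<le> 4/3" by (simp add: mult_exp_exp)
  moreover have "exp w \<le> exp (1/4)" using w unfolding w_def by simp
  ultimately have F43: "F \<le> 4/3" using Fw unfolding w_def by linarith
  have "-c*(S2*c) + (S2*c)^2/(4*S2) = -(3*w/4)"
    unfolding w_def using S2 by (simp add: field_simps power2_eq_square)
  moreover have "F * exp (-(3*w/4)) \<le> F * (1 - 3*w/4 + (3*w/4)^2/2)"
    using exp_minus_le_quadratic[of "3*w/4"] wp F by (intro mult_left_mono) auto
  moreover have "(S2*c) * a \<le> (S2*c) * (F*c/2)" using a S2 c by (intro mult_left_mono) auto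
  then have "(S2*c) * a \<le> w*F/2" unfolding w_def by (simp add: power2_eq_square algebra_simps)
  ultimately have "B \<ge> F - F * (1 - 3*w/4 + (3*w/4)^2/2) - w*F/2" using B by simp
  then have "B \<ge> F * w * (1/4 - 9*w/32)" by (simp add: algebra_simps power2_eq_square)
  moreover have "F * w * (1/4 - 9*w/32) \<ge> F * w * (23/128)"
    using w F wp unfolding w_def by (intro mult_left_mono) auto
  ultimately have B': "B \<ge> F * w * (23/128)" by linarith
  have "sqrt S2 \<ge> 2" using S2 real_sqrt_le_mono[of 4 S2] by simp
  then have "(sqrt S2 + 2) * S2 \<ge> 4 * 4" using S2 by (intro mult_mono) auto
  then have K: "(sqrt S2 + 2) * S2 * (23/128) \<ge> F" using F43 by simp
  have "(F*c)^2 = (F*c^2) * F" by (simp add: power2_eq_square)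
  also have "\<dots> \<le> (F*c^2) * ((sqrt S2 + 2) * S2 * (23/128))" using K F by (intro mult_left_mono) auto
  also have "\<dots> = (sqrt S2 + 2) * (F * w * (23/128))" unfolding w_def by (simp add: algebra_simps)
  also have "\<dots> \<le> (sqrt S2 + 2) * B" using B' S2 by (intro mult_left_mono) auto
  finally show ?thesis .
qed

lemma minimizer_norm_le_gap_large:
  fixes F c S2 a B :: real
  assumes S2: "S2 \<ge> 4" and F: "F > 0" and c: "c > 0" "c \<le> 1/2" and a: "a \<le> F*c/2"
    and w: "S2 * c^2 > 1/4"
    and B: "B \<ge> F - F * exp (-c*(1/(4*c)) + (1/(4*c))^2/(4*S2)) - (1/(4*c)) * a"
  shows "F*c \<le> 4*(sqrt S2 + 2) * B"
proof -
  have "(1/(4*c))^2/(4*S2) = 1/(64*(S2*c^2))" using c S2 by (simp add: field_simps power2_eq_square)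
  also have "\<dots> \<le> 1/16" using w by (simp add: field_simps)
  finally have "-c*(1/(4*c)) + (1/(4*c))^2/(4*S2) \<le> -(3/16)" using c by simp
  then have "exp (-c*(1/(4*c)) + (1/(4*c))^2/(4*S2)) \<le> exp (-(3/16))" by simp
  also have "\<dots> \<le> 1 - 3/16 + (3/16)^2/2" by (rule exp_minus_le_quadratic) simp
  finally have "exp (-c*(1/(4*c)) + (1/(4*c))^2/(4*S2)) \<le> 1 - 3/16 + (3/16)^2/2" .
  then have "F * exp (-c*(1/(4*c)) + (1/(4*c))^2/(4*S2)) \<le> F * (1 - 3/16 + (3/16)^2/2)"
    using F by (intro mult_left_mono) auto
  moreover have "(1/(4*c)) * a \<le> (1/(4*c)) * (F*c/2)" using a c by (intro mult_left_mono) auto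
  then have "(1/(4*c)) * a \<le> F/8" using c by simp
  ultimately have "B \<ge> 23*F/512" using B by (simp add: power2_eq_square algebra_simps)
  moreover have "sqrt S2 \<ge> 2" using S2 real_sqrt_le_mono[of 4 S2] by simp
  ultimately have "4*(sqrt S2 + 2)*B \<ge> 16 * (23*F/512)" using F by (intro mult_mono) auto
  moreover have "F*c \<le> F*(1/2)" using c F by (intro mult_left_mono) auto
  ultimately show ?thesis using F by linarith
qed

lemma minimizer_norm_le_gap:
  fixes F c S2 a B :: real
  assumes S2: "S2 \<ge> 4" and F: "F > 0" and c: "c \<ge> 0" "c \<le> 1/2" and a: "a \<ge> 0"
    and Fw: "c < 1/2 \<Longrightarrow> F \<le> exp (S2 * c^2)"
    and B: "\<And>\<delta>. \<delta> \<ge> 0 \<Longrightarrow> B \<ge> F - F * exp (-c*\<delta> + \<delta>^2/(4*S2)) - \<delta> * a"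
  shows "F*c \<le> max (a + sqrt ((sqrt S2 + 2) * B)) (max (2*a) (4*(sqrt S2 + 2) * B))"
proof (cases "F*c \<le> 2*a")
  case False
  then have a2: "a \<le> F*c/2" by simp
  have cp: "c > 0" using False a F c by (cases "c = 0") auto
  show ?thesis
  proof (cases "S2 * c^2 \<le> 1/4")
    case True
    have "4 * c^2 \<le> S2 * c^2" using S2 by (intro mult_right_mono) auto
    then have "c^2 < (1/2)^2" using True by (simp add: power2_eq_square)
    then have "c < 1/2" by (rule power_less_imp_less_base) simp
    then have "(F*c)^2 \<le> (sqrt S2 + 2) * B"
      using minimizer_norm_sq_le_gap_small[OF S2 F cp a2 True Fw B] cp S2 by simp
    then have "F*c \<le> sqrt ((sqrt S2 + 2) * B)" using F cp by (simp add: real_le_rsqrt)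
    then show ?thesis using a by simp
  next
    case False
    have "F*c \<le> 4*(sqrt S2 + 2) * B"
      using minimizer_norm_le_gap_large[OF S2 F cp c(2) a2] False B[of "1/(4*c)"] cp by simp
    then show ?thesis by simp
  qed
qed simp

lemma bregman_alg_phi_alg_x:
  fixes g :: "nat \<Rightarrow> 'a::euclidean_space" and \<eta> :: "nat \<Rightarrow> real" and t :: nat
  assumes t: "1 \<le> t"
  defines "S \<equiv> alg_S g \<eta> (t - 1)" and "Q \<equiv> alg_Q g \<eta> (t - 1)" and "\<theta> \<equiv> alg_theta g \<eta> (t - 1)"
  shows "bregman (alg_phi g \<eta> t) y (alg_x g \<eta> t) = psi (norm y) S Q + psi_star_sq (S^2) Q (norm \<theta>) - inner \<theta> y"
proof -
  have S: "S \<noteq> 0" "S^2 \<ge> 1"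
    unfolding S_def alg_S_sq using alg_S_neq_0 alg_S2_ge[of g \<eta> "t - 1"] by auto
  have xt: "alg_x g \<eta> t = psi_minimizer (S^2) Q \<theta>"
    unfolding S_def Q_def \<theta>_def alg_S_sq by (rule alg_x_eq_psi_minimizer[OF t])
  have phi: "alg_phi g \<eta> t = (\<lambda>x. psi (norm x) S Q)" unfolding alg_phi_def S_def Q_def by simp
  have "frechet_derivative (alg_phi g \<eta> t) (at (alg_x g \<eta> t)) = inner \<theta>"
    unfolding phi xt by (rule frechet_derivative_at[OF has_derivative_psi_norm[OF S], symmetric])
  then show ?thesis
    unfolding bregman_def phi xt using psi_norm_psi_minimizer[OF S(1), of Q \<theta>]
    by (simp add: inner_diff_right)
qed

lemma fenchel_gap_lower_shifted:
  fixes \<theta> y :: "'a::real_inner" and S Q :: real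
  defines "F \<equiv> psi_star_sq (S^2) Q (norm \<theta>)" and "c \<equiv> quad_argmax (S^2) (norm \<theta>)"
  assumes "S \<noteq> 0" "\<delta> \<ge> 0"
  shows "psi (norm y) S Q + F - inner \<theta> y \<ge> F - F * exp (-c*\<delta> + \<delta>^2/(4*S^2)) - \<delta> * norm y"
proof -
  define \<sigma> where "\<sigma> = norm \<theta>"
  have S2: "S^2 > 0" using assms by simp
  have "quad_max (S^2) (\<sigma> - \<delta>) - Q \<le> (quad_max (S^2) \<sigma> - Q) + (-c*\<delta> + \<delta>^2/(4*S^2))"
    using quad_max_smooth[OF S2, of "\<sigma> - \<delta>" \<sigma>] unfolding c_def \<sigma>_def by (simp add: power2_eq_square)
  then have "psi_star_sq (S^2) Q (\<sigma> - \<delta>) \<le> F * exp (-c*\<delta> + \<delta>^2/(4*S^2))"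
    unfolding F_def psi_star_sq_def \<sigma>_def by (simp add: mult_exp_exp)
  moreover have "psi (norm y) S Q \<ge> (\<sigma> - \<delta>) * norm y - psi_star_sq (S^2) Q (\<sigma> - \<delta>)"
    by (rule fenchel_young_psi[OF assms(3)])
  moreover have "inner \<theta> y \<le> \<sigma> * norm y" unfolding \<sigma>_def by (rule norm_cauchy_schwarz)
  ultimately show ?thesis by (simp add: algebra_simps)
qed

lemma norm_alg_x_le_bregman:
  fixes g :: "nat \<Rightarrow> 'a::euclidean_space"
  assumes t: "1 \<le> t"
  shows "norm (alg_x g \<eta> t) \<le>
         max (norm y + sqrt ((alg_S g \<eta> (t - 1) + 2) * bregman (alg_phi g \<eta> t) y (alg_x g \<eta> t)))
             (max (2 * norm y)
                  (4 * (alg_S g \<eta> (t - 1) + 2) * bregman (alg_phi g \<eta> t) y (alg_x g \<eta> t)))"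
proof -
  define S where "S = alg_S g \<eta> (t - 1)"
  define Q where "Q = alg_Q g \<eta> (t - 1)"
  define \<theta> where "\<theta> = alg_theta g \<eta> (t - 1)"
  define F where "F = psi_star_sq (S^2) Q (norm \<theta>)"
  define c where "c = quad_argmax (S^2) (norm \<theta>)"
  have S2: "S^2 \<ge> 4" unfolding S_def alg_S_sq by (rule alg_S2_ge)
  have "S \<ge> 0" unfolding S_def alg_S_def using alg_S2_ge[of g \<eta> "t - 1"] by simp
  then have S: "S \<noteq> 0" "sqrt (S^2) = S" unfolding S_def by (auto simp: alg_S_neq_0)
  have "norm (alg_x g \<eta> t) = F * c"
    unfolding alg_x_eq_psi_minimizer[OF t] F_def c_def S_def Q_def \<theta>_def alg_S_sq[symmetric]
    by (rule norm_psi_minimizer) (simp add: alg_S_neq_0)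
  moreover have "F * c \<le> max (norm y + sqrt ((sqrt (S^2) + 2) * bregman (alg_phi g \<eta> t) y (alg_x g \<eta> t)))
      (max (2 * norm y) (4 * (sqrt (S^2) + 2) * bregman (alg_phi g \<eta> t) y (alg_x g \<eta> t)))"
  proof (rule minimizer_norm_le_gap[OF S2])
    show "F > 0" unfolding F_def by (rule psi_star_sq_pos)
    show "c \<ge> 0" unfolding c_def using S2 by (intro quad_argmax_nonneg) auto
    show "c \<le> 1/2" unfolding c_def by (rule quad_argmax_bounds)
    show "F \<le> exp (S^2 * c^2)" if "c < 1/2"
      using quad_max_interior[of "S^2" "norm \<theta>"] that S(1) alg_Q_nonneg[of g \<eta> "t - 1"]
      unfolding F_def c_def psi_star_sq_def Q_def by simp
    show "bregman (alg_phi g \<eta> t) y (alg_x g \<eta> t) \<ge> F - F * exp (-c*\<delta> + \<delta>^2/(4*S^2)) - \<delta> * norm y"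
      if "\<delta> \<ge> 0" for \<delta>
      unfolding bregman_alg_phi_alg_x[OF t] S_def[symmetric] Q_def[symmetric] \<theta>_def[symmetric]
        F_def c_def using fenchel_gap_lower_shifted[OF S(1) that] .
  qed simp
  ultimately show ?thesis using S(2) unfolding S_def by simp
qed

section \<open>Part (b), deterministic part: a Lyapunov function along the run\<close>

lemma alg_S2_eq_sum: "alg_S2 g \<eta> n = 4 + (\<Sum>k<n. (\<eta> (Suc k))^2 * (norm (g (Suc k)))^2)"
  by (induction n) (auto simp: power_mult_distrib)

lemma alg_S2_le_suminf:
  assumes "summable (\<lambda>t. (\<eta> (Suc t))^2 * (norm (g (Suc t)))^2)"
  shows "alg_S2 g \<eta> n \<le> 4 + (\<Sum>t. (\<eta> (Suc t))^2 * (norm (g (Suc t)))^2)"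
  unfolding alg_S2_eq_sum using sum_le_suminf[OF assms, of "{..<n}"] by simp

lemma alg_Q_le: "alg_Q g \<eta> n \<le> (alg_S2 g \<eta> n - 4) / 4"
proof (induction n)
  case (Suc n)
  define u where "u = (norm (\<eta> (Suc n) *\<^sub>R g (Suc n)))^2"
  have "u / alg_S2 g \<eta> (Suc n) \<le> u / 4"
    using alg_S2_ge[of g \<eta> "Suc n"] unfolding u_def by (intro divide_left_mono) auto
  moreover have "alg_Q g \<eta> (Suc n) = alg_Q g \<eta> n + u / alg_S2 g \<eta> (Suc n)"
    unfolding u_def by (simp del: alg_S2.simps)
  ultimately show ?case using Suc unfolding u_def by simp
qed simp

lemma alg_Q_le_Suc: "alg_Q g \<eta> n \<le> alg_Q g \<eta> (Suc n)"
  using alg_S2_ge[of g \<eta> "Suc n"] by (simp del: alg_S2.simps)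

lemma norm_alg_theta_le:
  assumes "\<forall>t\<ge>1. norm (\<eta> t *\<^sub>R g t) \<le> 1"
  shows "norm (alg_theta g \<eta> n) \<le> real n"
proof (induction n)
  case (Suc n)
  have "norm (alg_theta g \<eta> (Suc n)) \<le> norm (alg_theta g \<eta> n) + norm (\<eta> (Suc n) *\<^sub>R g (Suc n))"
    using norm_triangle_ineq4[of "alg_theta g \<eta> n" "\<eta> (Suc n) *\<^sub>R g (Suc n)"] by simp
  also have "\<dots> \<le> real n + 1" using Suc assms by (intro add_mono) auto
  finally show ?case by simp
qed simp

definition alg_potential :: "(nat \<Rightarrow> 'a::euclidean_space) \<Rightarrow> (nat \<Rightarrow> real) \<Rightarrow> nat \<Rightarrow> real" where
  "alg_potential g \<eta> n = psi_star_sq (alg_S2 g \<eta> n) (alg_Q g \<eta> n) (norm (alg_theta g \<eta> n))"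

lemma alg_potential_pos: "alg_potential g \<eta> n > 0"
  unfolding alg_potential_def by (rule psi_star_sq_pos)

lemma alg_potential_le_exp: "alg_potential g \<eta> n \<le> exp (norm (alg_theta g \<eta> n) / 2)"
  using quad_max_le_abs[of "alg_S2 g \<eta> n" "norm (alg_theta g \<eta> n)"] alg_S2_ge[of g \<eta> n]
    alg_Q_nonneg[of g \<eta> n]
  unfolding alg_potential_def psi_star_sq_def by simp

lemma alg_potential_le_exp_n:
  assumes "\<forall>t\<ge>1. norm (\<eta> t *\<^sub>R g t) \<le> 1"
  shows "alg_potential g \<eta> n \<le> exp (real n / 2)"
proof -
  have "exp (norm (alg_theta g \<eta> n) / 2) \<le> exp (real n / 2)" using norm_alg_theta_le[OF assms] by simp
  with alg_potential_le_exp show ?thesis by (rule order_trans)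
qed

lemma alg_x_Suc: "alg_x g \<eta> (Suc n) = alg_potential g \<eta> n *\<^sub>R ball_argmax (alg_S2 g \<eta> n) (alg_theta g \<eta> n)"
  using alg_x_eq_psi_minimizer[of "Suc n" g \<eta>] unfolding psi_minimizer_def alg_potential_def by simp

lemma norm_alg_x_Suc_le: "norm (alg_x g \<eta> (Suc n)) \<le> alg_potential g \<eta> n / 2"
proof -
  have "norm (alg_x g \<eta> (Suc n)) = alg_potential g \<eta> n * quad_argmax (alg_S2 g \<eta> n) (norm (alg_theta g \<eta> n))"
    unfolding alg_x_Suc using norm_ball_argmax[of "alg_S2 g \<eta> n"] alg_S2_ge[of g \<eta> n]
      alg_potential_pos[of g \<eta> n] by simp
  also have "\<dots> \<le> alg_potential g \<eta> n * (1/2)"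
    using alg_potential_pos[of g \<eta> n] quad_argmax_bounds by (intro mult_left_mono) (auto intro: less_imp_le)
  finally show ?thesis by simp
qed

lemma alg_potential_Suc_le_exp:
  fixes g :: "nat \<Rightarrow> 'a::euclidean_space" and \<eta> :: "nat \<Rightarrow> real" and n :: nat
  defines "l \<equiv> \<eta> (Suc n) *\<^sub>R g (Suc n)"
  shows "alg_potential g \<eta> (Suc n) \<le> alg_potential g \<eta> n *
     exp (- inner l (ball_argmax (alg_S2 g \<eta> n) (alg_theta g \<eta> n)) + (norm l)^2/(4 * alg_S2 g \<eta> n))"
proof -
  define S2 where "S2 = alg_S2 g \<eta> n"
  define \<theta> where "\<theta> = alg_theta g \<eta> n"
  have S2: "S2 > 0" using alg_S2_ge[of g \<eta> n] unfolding S2_def by linarith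
  have "alg_potential g \<eta> (Suc n) \<le> psi_star_sq S2 (alg_Q g \<eta> n) (norm (\<theta> - l))"
    unfolding alg_potential_def S2_def \<theta>_def l_def alg_theta.simps
    by (rule psi_star_sq_antimono) (use alg_S2_ge[of g \<eta> n] alg_Q_le_Suc[of g \<eta> n] in auto)
  also have "\<dots> \<le> psi_star_sq S2 (alg_Q g \<eta> n) (norm \<theta>) * exp (- inner l (ball_argmax S2 \<theta>) + (norm l)^2/(4*S2))"
    using quad_max_norm_diff_le[OF S2, of \<theta> l] unfolding psi_star_sq_def by (simp add: mult_exp_exp)
  finally show ?thesis unfolding alg_potential_def S2_def \<theta>_def .
qed

text \<open>For a step of length at most one, \<open>exp\<close> is replaced by its second-order expansion; the
  linear term becomes \<open>\<langle>\<ell>, x_(n+1)\<rangle>\<close> since \<open>x_(n+1) = \<psi>\<^sup>* \<cdot> ball_argmax\<close>.\<close>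

lemma alg_potential_Suc_le:
  fixes g :: "nat \<Rightarrow> 'a::euclidean_space" and \<eta> :: "nat \<Rightarrow> real" and n :: nat
  defines "l \<equiv> \<eta> (Suc n) *\<^sub>R g (Suc n)"
  assumes l1: "norm l \<le> 1"
  shows "alg_potential g \<eta> (Suc n)
      \<le> alg_potential g \<eta> n - inner l (alg_x g \<eta> (Suc n)) + (norm l)^2 * alg_potential g \<eta> n / 2"
proof -
  define S2 where "S2 = alg_S2 g \<eta> n"
  define b where "b = ball_argmax S2 (alg_theta g \<eta> n)"
  define P where "P = alg_potential g \<eta> n"
  define s where "s = norm l"
  define y where "y = - inner l b + s^2/(4*S2)"
  have S2: "S2 \<ge> 4" unfolding S2_def by (rule alg_S2_ge)
  have s: "0 \<le> s" "s \<le> 1" using l1 unfolding s_def by auto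
  have "\<bar>inner l b\<bar> \<le> s * norm b" unfolding s_def by (rule Cauchy_Schwarz_ineq2)
  also have "\<dots> \<le> s * (1/2)"
  proof (intro mult_left_mono)
    show "norm b \<le> 1/2"
      unfolding b_def using norm_ball_argmax[of S2 "alg_theta g \<eta> n"] S2 quad_argmax_bounds(2) by simp
  qed (use s in simp)
  finally have lb: "\<bar>inner l b\<bar> \<le> s/2" by simp
  have ss: "s^2 \<le> s" using s by (simp add: power2_eq_square mult_left_le_one_le)
  have q: "0 \<le> s^2/(4*S2)" "s^2/(4*S2) \<le> s^2/16"
    using S2 by (simp, intro divide_left_mono) auto
  have "\<bar>y\<bar> \<le> 9/16 * s" unfolding y_def using lb q ss by linarith
  then have "\<bar>y\<bar>^2 \<le> (9/16 * s)^2" by (intro power_mono) auto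
  also have "(9/16 * s)^2 = 81/256 * s^2" by (simp add: power2_eq_square)
  finally have "y^2 \<le> 81/256 * s^2" by simp
  moreover have "exp y \<le> 1 + y + (8/7) * y^2" by (rule exp_le_quadratic) (use \<open>\<bar>y\<bar> \<le> 9/16 * s\<close> s in linarith)
  moreover have "y \<le> - inner l b + s^2/16" unfolding y_def using q by linarith
  ultimately have "exp y \<le> 1 - inner l b + s^2/2" using zero_le_power2[of s] by linarith
  then have "P * exp y \<le> P * (1 - inner l b + s^2/2)"
    using alg_potential_pos unfolding P_def by (intro mult_left_mono) (auto intro: less_imp_le)
  moreover have "alg_potential g \<eta> (Suc n) \<le> P * exp y"
    using alg_potential_Suc_le_exp unfolding P_def y_def b_def S2_def s_def l_def .
  ultimately show ?thesis
    unfolding alg_x_Suc P_def[symmetric] b_def S2_def s_def by (simp add: algebra_simps)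
qed

text \<open>The constant is \<open>\<parallel>x\<^sup>*\<parallel>\<^sup>2/(4A) + 2\<parallel>x\<^sup>*\<parallel>\<close>, where \<open>\<psi>\<^sup>*/4 \<ge> A \<parallel>\<theta>\<parallel>\<^sup>2\<close> with
  \<open>A = 1/(64 exp (1 + \<gamma>/2))\<close> as long as \<open>S\<^sup>2 \<le> 4 + \<gamma>\<close>.\<close>

definition lyapunov_const :: "real \<Rightarrow> real \<Rightarrow> real" where
  "lyapunov_const \<gamma> m = 16 * exp (1 + \<gamma>/2) * m^2 + 2 * m"

definition lyapunov :: "'a \<Rightarrow> real \<Rightarrow> (nat \<Rightarrow> 'a::euclidean_space) \<Rightarrow> (nat \<Rightarrow> real) \<Rightarrow> nat \<Rightarrow> real" where
  "lyapunov xs \<gamma> g \<eta> n = alg_potential g \<eta> n - inner (alg_theta g \<eta> n) xs + lyapunov_const \<gamma> (norm xs)"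

lemma lyapunov_ge:
  assumes S2: "alg_S2 g \<eta> n \<le> 4 + \<gamma>"
  shows "lyapunov xs \<gamma> g \<eta> n \<ge> 3/4 * alg_potential g \<eta> n + 2 * norm xs"
proof -
  define \<sigma> where "\<sigma> = norm (alg_theta g \<eta> n)"
  define m where "m = norm xs"
  define A where "A = 1 / (64 * exp (1 + \<gamma>/2))"
  have A: "A > 0" unfolding A_def by simp
  have "4 * A * \<sigma>^2 = (\<sigma>^2/16) / exp (1 + \<gamma>/2)" unfolding A_def by simp
  also have "\<dots> \<le> exp (\<sigma>/2) / exp (1 + \<gamma>/2)"
    using exp_half_ge_square[of \<sigma>] unfolding \<sigma>_def by (intro divide_right_mono) auto
  also have "\<dots> = exp (\<sigma>/2 - (1 + \<gamma>/2))" by (rule exp_diff[symmetric])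
  also have "\<dots> \<le> exp (\<sigma>/2 - alg_S2 g \<eta> n/4 - alg_Q g \<eta> n)" using S2 alg_Q_le[of g \<eta> n] by simp
  also have "\<dots> \<le> alg_potential g \<eta> n"
    unfolding alg_potential_def psi_star_sq_def \<sigma>_def
    using quad_max_ge_abs[of "alg_S2 g \<eta> n" "norm (alg_theta g \<eta> n)"] alg_S2_ge[of g \<eta> n] by simp
  finally have "alg_potential g \<eta> n / 4 \<ge> A * \<sigma>^2" by simp
  moreover have "inner (alg_theta g \<eta> n) xs \<le> m * \<sigma>"
    unfolding \<sigma>_def m_def by (metis mult.commute norm_cauchy_schwarz)
  moreover have "m * \<sigma> - A * \<sigma>^2 \<le> m^2 / (4*A)" by (rule linear_minus_square_le[OF A])
  moreover have "m^2 / (4*A) + 2*m = lyapunov_const \<gamma> m" unfolding A_def lyapunov_const_def by simp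
  ultimately show ?thesis unfolding lyapunov_def m_def by linarith
qed

lemma lyapunov_nonneg:
  assumes "alg_S2 g \<eta> n \<le> 4 + \<gamma>"
  shows "lyapunov xs \<gamma> g \<eta> n \<ge> 0"
  using lyapunov_ge[OF assms, of xs] alg_potential_pos[of g \<eta> n] norm_ge_zero[of xs] by linarith

lemma discount_step:
  fixes V V' N sg :: real
  assumes V: "V \<ge> 0" and sg: "0 \<le> sg" "sg \<le> 1"
    and step: "V' \<le> V * (1 + sg^2) - N" and Nb: "\<bar>N\<bar> \<le> 2/3 * sg * V"
  shows "V' * exp (-3 * sg^2) \<le> V - N"
proof -
  define u where "u = sg^2"
  define p where "p = exp (-3 * u)"
  have u: "u \<ge> 0" "u \<le> sg" unfolding u_def using sg by (auto simp: power2_eq_square mult_left_le_one_le)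
  have p0: "p > 0" unfolding p_def by simp
  have p1: "p \<le> 1" unfolding p_def using u by simp
  have pb: "p * (1 + 3*u) \<le> 1"
  proof -
    have "1 + 3*u \<le> exp (3*u)" by (rule exp_ge_add_one_self)
    then have "p * (1 + 3*u) \<le> p * exp (3*u)" using p0 by (intro mult_left_mono) auto
    also have "\<dots> = 1" unfolding p_def by (simp add: mult_exp_exp)
    finally show ?thesis .
  qed
  have "V' * p \<le> (V * (1 + u) - N) * p" using step p0 unfolding u_def by (intro mult_right_mono) auto
  also have "\<dots> = V - N + (V * ((1+u)*p - 1) + N * (1 - p))" by (simp add: algebra_simps)
  also have "\<dots> \<le> V - N"
  proof -
    have "N * (1 - p) \<le> \<bar>N\<bar> * (1 - p)" using p1 by (intro mult_right_mono) auto
    also have "\<dots> \<le> (2/3 * sg * V) * (1 - p)" using Nb p1 by (intro mult_right_mono) auto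
    finally have a: "N * (1 - p) \<le> (2/3 * sg * V) * (1 - p)" .
    have br: "((1+u)*p - 1) + (1 - p) * sg * (2/3) \<le> 0"
    proof -
      have c: "1 + u - 2/3* sg \<ge> 0" using sg u by linarith
      have "(1 + u - 2/3* sg) * p * (1 + 3*u) \<le> (1 + u - 2/3* sg) * 1"
        using pb c by (metis mult.assoc mult_left_mono)
      moreover have "(1 + u - 2/3* sg) * 1 \<le> (1 - 2/3* sg) * (1 + 3*u)"
      proof -
        have e: "(1 - 2/3* sg) * (1 + 3*u) = 1 + u - 2/3* sg + 2*u*(1 - sg)" by (simp add: algebra_simps)
        have "2*u*(1 - sg) \<ge> 0" using sg u by simp
        then show ?thesis unfolding e by simp
      qed
      ultimately have "(1 + u - 2/3* sg) * p * (1 + 3*u) \<le> (1 - 2/3* sg) * (1 + 3*u)" by linarith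
      then have h: "(1 + u - 2/3* sg) * p \<le> 1 - 2/3* sg" using u by (simp add: mult_le_cancel_right)
      have "((1+u)*p - 1) + (1 - p) * sg * (2/3) = (1 + u - 2/3* sg) * p - (1 - 2/3* sg)" by (simp add: field_simps)
      then show ?thesis using h by linarith
    qed
    have "V * ((1+u)*p - 1) + N * (1 - p) \<le> V * ((1+u)*p - 1) + (2/3 * sg * V) * (1 - p)" using a by simp
    also have "\<dots> = V * (((1+u)*p - 1) + (1 - p) * sg * (2/3))" by (simp add: algebra_simps)
    also have "\<dots> \<le> 0" using V br by (simp add: mult_nonneg_nonpos)
    finally show ?thesis by simp
  qed
  finally show ?thesis unfolding p_def u_def .
qed


lemma lyapunov_step:
  fixes g :: "nat \<Rightarrow> 'a::euclidean_space" and \<eta> :: "nat \<Rightarrow> real" and n :: nat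
  defines "l \<equiv> \<eta> (Suc n) *\<^sub>R g (Suc n)"
  assumes l1: "norm l \<le> 1" and S2: "alg_S2 g \<eta> n \<le> 4 + \<gamma>"
  shows "lyapunov xs \<gamma> g \<eta> (Suc n) * exp (-3 * (norm l)^2) \<le> lyapunov xs \<gamma> g \<eta> n - inner l (alg_x g \<eta> (Suc n) - xs)"
proof -
  define V where "V = lyapunov xs \<gamma> g \<eta> n"
  define P where "P = alg_potential g \<eta> n"
  define x where "x = alg_x g \<eta> (Suc n)"
  have VP: "V \<ge> 3/4 * P + 2 * norm xs" unfolding V_def P_def by (rule lyapunov_ge[OF S2])
  have V: "V \<ge> 0" unfolding V_def by (rule lyapunov_nonneg[OF S2])
  have "P \<le> 2 * V" using VP alg_potential_pos[of g \<eta> n] norm_ge_zero[of xs] unfolding P_def by linarith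
  then have "(norm l)^2 * P \<le> (norm l)^2 * (2 * V)" by (intro mult_left_mono) auto
  then have "(norm l)^2 * P / 2 \<le> (norm l)^2 * V" by simp
  then have step: "lyapunov xs \<gamma> g \<eta> (Suc n) \<le> V * (1 + (norm l)^2) - inner l (x - xs)"
    using alg_potential_Suc_le[of \<eta> n g] l1 unfolding lyapunov_def V_def P_def x_def l_def
    by (simp add: inner_diff_left inner_diff_right algebra_simps)
  have "\<bar>inner l (x - xs)\<bar> \<le> norm l * norm (x - xs)" by (rule Cauchy_Schwarz_ineq2)
  also have "\<dots> \<le> norm l * (P/2 + norm xs)"
    using norm_alg_x_Suc_le[of g \<eta> n] norm_triangle_ineq4[of x xs] unfolding x_def P_def
    by (intro mult_left_mono) auto
  also have "\<dots> \<le> norm l * (2/3 * V)"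
    by (rule mult_left_mono) (use VP norm_ge_zero[of xs] in linarith, simp)
  finally have "\<bar>inner l (x - xs)\<bar> \<le> 2/3 * norm l * V" by simp
  from discount_step[OF V norm_ge_zero l1 step this] show ?thesis unfolding V_def x_def .
qed

definition lyapunov_disc :: "'a \<Rightarrow> real \<Rightarrow> (nat \<Rightarrow> 'a::euclidean_space) \<Rightarrow> (nat \<Rightarrow> real) \<Rightarrow> nat \<Rightarrow> real" where
  "lyapunov_disc xs \<gamma> g \<eta> n = lyapunov xs \<gamma> g \<eta> n * exp (-3 * (alg_S2 g \<eta> n - 4))"

lemma lyapunov_disc_Suc_le:
  fixes g :: "nat \<Rightarrow> 'a::euclidean_space"
  assumes l1: "norm (\<eta> (Suc n) *\<^sub>R g (Suc n)) \<le> 1" and S2: "alg_S2 g \<eta> n \<le> 4 + \<gamma>"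
  shows "lyapunov_disc xs \<gamma> g \<eta> (Suc n) \<le> lyapunov_disc xs \<gamma> g \<eta> n
      - exp (-3 * (alg_S2 g \<eta> n - 4)) * (\<eta> (Suc n) * inner (g (Suc n)) (alg_x g \<eta> (Suc n) - xs))"
proof -
  define l where "l = \<eta> (Suc n) *\<^sub>R g (Suc n)"
  define E where "E = exp (-3 * (alg_S2 g \<eta> n - 4))"
  have "lyapunov_disc xs \<gamma> g \<eta> (Suc n) = (lyapunov xs \<gamma> g \<eta> (Suc n) * exp (-3 * (norm l)^2)) * E"
    unfolding lyapunov_disc_def E_def l_def by (simp add: mult_exp_exp algebra_simps)
  also have "\<dots> \<le> (lyapunov xs \<gamma> g \<eta> n - inner l (alg_x g \<eta> (Suc n) - xs)) * E"
    using lyapunov_step[of \<eta> n g \<gamma> xs] l1 S2 unfolding l_def E_def by (intro mult_right_mono) auto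
  also have "\<dots> = lyapunov_disc xs \<gamma> g \<eta> n - E * (\<eta> (Suc n) * inner (g (Suc n)) (alg_x g \<eta> (Suc n) - xs))"
    unfolding lyapunov_disc_def E_def l_def by (simp add: algebra_simps)
  finally show ?thesis unfolding E_def .
qed

lemma lyapunov_disc_nonneg:
  assumes "alg_S2 g \<eta> n \<le> 4 + \<gamma>"
  shows "lyapunov_disc xs \<gamma> g \<eta> n \<ge> 0"
  unfolding lyapunov_disc_def using lyapunov_nonneg[OF assms] by simp

lemma norm_alg_x_Suc_le_lyapunov_disc:
  assumes S2: "alg_S2 g \<eta> n \<le> 4 + \<gamma>"
  shows "norm (alg_x g \<eta> (Suc n)) \<le> lyapunov_disc xs \<gamma> g \<eta> n * exp (3 * \<gamma>)"
proof -
  have "norm (alg_x g \<eta> (Suc n)) \<le> lyapunov xs \<gamma> g \<eta> n"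
    using norm_alg_x_Suc_le[of g \<eta> n] lyapunov_ge[OF S2, of xs] alg_potential_pos[of g \<eta> n]
      norm_ge_zero[of xs] by linarith
  also have "\<dots> = lyapunov_disc xs \<gamma> g \<eta> n * exp (3 * (alg_S2 g \<eta> n - 4))"
    unfolding lyapunov_disc_def by (simp add: mult_exp_exp)
  also have "\<dots> \<le> lyapunov_disc xs \<gamma> g \<eta> n * exp (3 * \<gamma>)"
    using S2 lyapunov_disc_nonneg[OF S2] by (intro mult_left_mono) auto
  finally show ?thesis .
qed

lemma lyapunov_disc_le:
  assumes l1: "\<forall>t\<ge>1. norm (\<eta> t *\<^sub>R g t) \<le> 1" and S2: "alg_S2 g \<eta> n \<le> 4 + \<gamma>"
  shows "lyapunov_disc xs \<gamma> g \<eta> n \<le> exp (real n / 2) + real n * norm xs + lyapunov_const \<gamma> (norm xs)"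
proof -
  have \<theta>: "norm (alg_theta g \<eta> n) \<le> real n" by (rule norm_alg_theta_le[OF l1])
  have "lyapunov_disc xs \<gamma> g \<eta> n \<le> lyapunov xs \<gamma> g \<eta> n"
    unfolding lyapunov_disc_def using lyapunov_nonneg[OF S2] alg_S2_ge[of g \<eta> n] by (simp add: mult_left_le)
  also have "\<dots> \<le> exp (real n / 2) + real n * norm xs + lyapunov_const \<gamma> (norm xs)"
  proof -
    have "alg_potential g \<eta> n \<le> exp (real n / 2)" by (rule alg_potential_le_exp_n[OF l1])
    moreover have "- inner (alg_theta g \<eta> n) xs \<le> real n * norm xs"
      using norm_cauchy_schwarz[of "- alg_theta g \<eta> n" xs] mult_right_mono[OF \<theta>, of "norm xs"] by simp
    ultimately show ?thesis unfolding lyapunov_def by linarith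
  qed
  finally show ?thesis .
qed

lemma norm_alg_x_Suc_le_exp:
  assumes "\<forall>t\<ge>1. norm (\<eta> t *\<^sub>R g t) \<le> 1"
  shows "norm (alg_x g \<eta> (Suc n)) \<le> exp (real n / 2)"
  using norm_alg_x_Suc_le[of g \<eta> n] alg_potential_le_exp_n[OF assms, of n] alg_potential_pos[of g \<eta> n]
  by linarith
section \<open>A maximal inequality for nonnegative supermartingales\<close>

text \<open>Supermartingales are phrased through integrals over the sets of the filtration, which
  avoids conditional expectations.\<close>

locale nonneg_supermartingale = prob_space M
  for M :: "'w measure" and Fl :: "nat \<Rightarrow> 'w measure" and Z :: "nat \<Rightarrow> 'w \<Rightarrow> real" and z0 :: real +
  assumes sets_Fl: "\<And>j. sets (Fl j) \<subseteq> sets M" and space_Fl: "\<And>j. space (Fl j) = space M"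
    and sets_Fl_mono: "\<And>j k. j \<le> k \<Longrightarrow> sets (Fl j) \<subseteq> sets (Fl k)"
    and adapted: "\<And>j. Z j \<in> borel_measurable (Fl j)"
    and integrable_Z: "\<And>j. integrable M (Z j)"
    and nonneg: "AE \<omega> in M. \<forall>j. Z j \<omega> \<ge> 0"
    and start: "\<And>\<omega>. \<omega> \<in> space M \<Longrightarrow> Z 0 \<omega> = z0"
    and supermartingale: "\<And>j B. B \<in> sets (Fl j) \<Longrightarrow>
          (\<integral>\<omega>. indicator B \<omega> * Z (Suc j) \<omega> \<partial>M) \<le> (\<integral>\<omega>. indicator B \<omega> * Z j \<omega> \<partial>M)"
begin

definition below :: "real \<Rightarrow> nat \<Rightarrow> 'w set" where
  "below l N = {\<omega> \<in> space M. \<forall>j\<le>N. Z j \<omega> \<le> l}"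

lemma below_in_Fl: "below l N \<in> sets (Fl N)"
proof -
  have "below l N = (\<Inter>j\<in>{..N}. {\<omega> \<in> space (Fl j). Z j \<omega> \<le> l})"
    unfolding below_def using space_Fl by auto
  also have "\<dots> \<in> sets (Fl N)"
  proof (rule sets.finite_INT)
    fix j assume "j \<in> {..N}"
    have "{\<omega> \<in> space (Fl j). Z j \<omega> \<le> l} \<in> sets (Fl j)" using adapted[of j] by measurable
    then show "{\<omega> \<in> space (Fl j). Z j \<omega> \<le> l} \<in> sets (Fl N)" using sets_Fl_mono[of j N] \<open>j \<in> {..N}\<close> by auto
  qed auto
  finally show ?thesis .
qed

lemma below_in_sets [measurable]: "below l N \<in> sets M"
  using below_in_Fl sets_Fl by blast

lemma below_Suc_subset: "below l (Suc N) \<subseteq> below l N"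
  unfolding below_def by auto

lemma integrable_indicator_below_Z: "integrable M (\<lambda>\<omega>. indicator (below l N) \<omega> * Z k \<omega>)"
  using integrable_mult_indicator[OF below_in_sets integrable_Z] by simp

lemma integrable_indicator_below: "integrable M (indicat_real (below l N))"
  by (rule integrable_real_indicator) (auto simp: less_top[symmetric])

text \<open>Leaving \<open>below l\<close> at time \<open>N + 1\<close> means exceeding \<open>l\<close>, so the stopped process
  loses at least \<open>l\<close> times the probability of leaving.\<close>

lemma indicator_below_Suc_Z_le:
  assumes "\<omega> \<in> space M"
  shows "indicator (below l (Suc N)) \<omega> * Z (Suc N) \<omega>
           + l * (indicator (below l N) \<omega> - indicator (below l (Suc N)) \<omega>)
         \<le> indicator (below l N) \<omega> * Z (Suc N) \<omega>"
proof (cases "\<omega> \<in> below l (Suc N)")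
  case True
  then show ?thesis using below_Suc_subset by (auto simp: indicator_def)
next
  case False
  show ?thesis
  proof (cases "\<omega> \<in> below l N")
    case True
    then have "Z (Suc N) \<omega> > l" using False assms unfolding below_def by (auto simp: le_Suc_eq)
    then show ?thesis using True False by (simp add: indicator_def)
  qed (use False in \<open>simp add: indicator_def\<close>)
qed

lemma stopped_integral_le:
  assumes "l > 0"
  shows "l * (1 - prob (below l N)) + (\<integral>\<omega>. indicator (below l N) \<omega> * Z N \<omega> \<partial>M) \<le> z0"
proof (induction N)
  case 0
  show ?case
  proof (cases "z0 \<le> l")
    case True
    then have "below l 0 = space M" unfolding below_def using start by auto
    moreover have "(\<integral>\<omega>. indicator (space M) \<omega> * Z 0 \<omega> \<partial>M) = (\<integral>\<omega>. z0 \<partial>M)"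
      by (rule Bochner_Integration.integral_cong) (auto simp: start)
    ultimately show ?thesis using prob_space by simp
  next
    case False
    then have "below l 0 = {}" unfolding below_def using start by auto
    then show ?thesis using False by simp
  qed
next
  case (Suc N)
  let ?A = "below l N" and ?A' = "below l (Suc N)"
  have "(\<integral>\<omega>. indicator ?A' \<omega> * Z (Suc N) \<omega> + l * (indicator ?A \<omega> - indicator ?A' \<omega>) \<partial>M)
      \<le> (\<integral>\<omega>. indicator ?A \<omega> * Z (Suc N) \<omega> \<partial>M)"
    by (intro integral_mono integrable_indicator_below_Z indicator_below_Suc_Z_le
        Bochner_Integration.integrable_add Bochner_Integration.integrable_mult_right
        Bochner_Integration.integrable_diff integrable_indicator_below)
  also have "\<dots> \<le> (\<integral>\<omega>. indicator ?A \<omega> * Z N \<omega> \<partial>M)"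
    by (rule supermartingale[OF below_in_Fl])
  finally have step: "(\<integral>\<omega>. indicator ?A' \<omega> * Z (Suc N) \<omega> \<partial>M) + l * (prob ?A - prob ?A')
      \<le> (\<integral>\<omega>. indicator ?A \<omega> * Z N \<omega> \<partial>M)"
    by (simp add: Bochner_Integration.integral_add Bochner_Integration.integral_diff
        integrable_indicator_below_Z integrable_indicator_below)
  then show ?case using Suc by (simp add: algebra_simps)
qed

theorem prob_exceed_le:
  assumes "l > 0"
  shows "prob (space M - below l N) \<le> z0 / l"
proof -
  have "(\<integral>\<omega>. indicator (below l N) \<omega> * Z N \<omega> \<partial>M) \<ge> 0"
    by (rule integral_nonneg_AE) (use nonneg in \<open>auto simp: indicator_def\<close>)
  then have "l * prob (space M - below l N) \<le> z0"
    using stopped_integral_le[OF assms, of N] prob_compl[OF below_in_sets] by simp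
  then show ?thesis using assms by (simp add: field_simps mult.commute)
qed

theorem AE_bdd_above: "AE \<omega> in M. bdd_above (range (\<lambda>j. Z j \<omega>))"
proof -
  define D where "D = (\<lambda>l. \<Union>N. space M - below l N)"
  have D_sets: "D l \<in> sets M" for l unfolding D_def by auto
  have prob_D: "prob (D l) \<le> z0 / l" if "l > 0" for l
  proof -
    have "incseq (\<lambda>N. space M - below l N)" by (rule incseq_SucI) (use below_Suc_subset in auto)
    then have "(\<lambda>N. prob (space M - below l N)) \<longlonglongrightarrow> prob (D l)"
      unfolding D_def by (intro finite_Lim_measure_incseq) auto
    then show ?thesis by (rule LIMSEQ_le_const2) (use prob_exceed_le[OF that] in auto)
  qed
  define W where "W = (\<Inter>k::nat. D (real (Suc k)))"
  have W_sets: "W \<in> sets M" unfolding W_def using D_sets by auto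
  have W_le: "prob W \<le> z0 / real (Suc k)" for k
    using finite_measure_mono[of W "D (real (Suc k))"] prob_D[of "real (Suc k)"] D_sets
    unfolding W_def by fastforce
  have "prob W = 0"
  proof (rule ccontr)
    assume "prob W \<noteq> 0"
    then have pos: "prob W > 0" using measure_nonneg[of M W] by linarith
    obtain k :: nat where "z0 / prob W < real k" using reals_Archimedean2 by blast
    then have "z0 < real (Suc k) * prob W" using pos by (simp add: field_simps)
    with W_le[of k] show False by (simp add: field_simps)
  qed
  then have "W \<in> null_sets M" using W_sets by (simp add: null_sets_def emeasure_eq_measure)
  then show ?thesis
  proof (rule AE_I')
    show "{\<omega> \<in> space M. \<not> bdd_above (range (\<lambda>j. Z j \<omega>))} \<subseteq> W"
    proof safe
      fix \<omega> assume \<omega>: "\<omega> \<in> space M" and unbdd: "\<not> bdd_above (range (\<lambda>j. Z j \<omega>))"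
      show "\<omega> \<in> W" unfolding W_def D_def
      proof safe
        fix k :: nat
        obtain j where "Z j \<omega> > real (Suc k)"
          using unbdd by (meson bdd_aboveI2 not_le)
        then show "\<omega> \<in> (\<Union>N. space M - below (real (Suc k)) N)" using \<omega> unfolding below_def by (fastforce simp: not_le)
      qed
    qed
  qed
qed

end
section \<open>Part (b), probabilistic part\<close>

lemma space_gen_sigma: "space (gen_sigma M fs) = space M"
  unfolding gen_sigma_def by (rule space_measure_of) auto

lemma sets_gen_sigma: "sets (gen_sigma M fs) = sigma_sets (space M) (\<Union>f\<in>fs. {f -` A \<inter> space M | A. A \<in> sets borel})"
  unfolding gen_sigma_def by (rule sets_measure_of) auto

lemma sets_gen_sigma_subset:
  assumes "\<And>f. f \<in> fs \<Longrightarrow> f \<in> borel_measurable M"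
  shows "sets (gen_sigma M fs) \<subseteq> sets M"
  unfolding sets_gen_sigma using assms measurable_sets by (intro sets.sigma_sets_subset) blast

lemma measurable_gen_sigma: "f \<in> fs \<Longrightarrow> f \<in> borel_measurable (gen_sigma M fs)"
  by (rule measurableI) (auto simp: space_gen_sigma sets_gen_sigma)

lemma sets_gen_sigma_mono: "fs \<subseteq> fs' \<Longrightarrow> sets (gen_sigma M fs) \<subseteq> sets (gen_sigma M fs')"
  unfolding sets_gen_sigma by (rule sigma_sets_mono) auto

locale alg_run =
  fixes M :: "'w measure" and gw :: "nat \<Rightarrow> 'w \<Rightarrow> 'a::euclidean_space" and \<eta>w :: "nat \<Rightarrow> 'w \<Rightarrow> real"
  assumes measurable_gw: "\<And>t. t \<ge> 1 \<Longrightarrow> gw t \<in> borel_measurable M"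
    and measurable_rand_x: "\<And>t. t \<ge> 1 \<Longrightarrow> rand_x gw \<eta>w t \<in> borel_measurable M"
    and adapted_\<eta>w: "\<And>t. t \<ge> 1 \<Longrightarrow> \<eta>w t \<in> borel_measurable (alg_filtration M gw \<eta>w t)"
begin

abbreviation "Fi \<equiv> alg_filtration M gw \<eta>w"

lemma generators_measurable:
  "f \<in> {rand_x gw \<eta>w s | s. 1 \<le> s \<and> s \<le> t} \<union> {gw s | s. 1 \<le> s \<and> s < t} \<Longrightarrow> f \<in> borel_measurable M"
  using measurable_gw measurable_rand_x by auto

lemma space_Fi: "space (Fi t) = space M"
  unfolding alg_filtration_def by (rule space_gen_sigma)

lemma sets_Fi: "sets (Fi t) \<subseteq> sets M"
  unfolding alg_filtration_def by (rule sets_gen_sigma_subset) (rule generators_measurable)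

lemma subalgebra_Fi: "subalgebra M (Fi t)"
  unfolding subalgebra_def using space_Fi sets_Fi by auto

lemma sets_Fi_mono: "s \<le> t \<Longrightarrow> sets (Fi s) \<subseteq> sets (Fi t)"
  unfolding alg_filtration_def by (rule sets_gen_sigma_mono) fastforce

lemma measurable_Fi_mono: "f \<in> borel_measurable (Fi s) \<Longrightarrow> s \<le> t \<Longrightarrow> f \<in> borel_measurable (Fi t)"
  using measurable_mono[OF order_refl _ sets_Fi_mono] by (metis space_Fi subsetD)

lemma rand_x_Fi: "1 \<le> s \<Longrightarrow> s \<le> t \<Longrightarrow> rand_x gw \<eta>w s \<in> borel_measurable (Fi t)"
  unfolding alg_filtration_def by (rule measurable_gen_sigma) blast

lemma gw_Fi: "1 \<le> s \<Longrightarrow> s < t \<Longrightarrow> gw s \<in> borel_measurable (Fi t)"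
  unfolding alg_filtration_def by (rule measurable_gen_sigma) blast

lemma \<eta>w_Fi: "1 \<le> s \<Longrightarrow> s \<le> t \<Longrightarrow> \<eta>w s \<in> borel_measurable (Fi t)"
  using adapted_\<eta>w measurable_Fi_mono by blast

end

lemma measurable_alg_state:
  fixes gw :: "nat \<Rightarrow> 'w \<Rightarrow> 'a::euclidean_space" and \<eta>w :: "nat \<Rightarrow> 'w \<Rightarrow> real"
  assumes g: "\<And>k. 1 \<le> k \<Longrightarrow> k \<le> n \<Longrightarrow> gw k \<in> borel_measurable N"
    and e: "\<And>k. 1 \<le> k \<Longrightarrow> k \<le> n \<Longrightarrow> \<eta>w k \<in> borel_measurable N"
  shows "(\<lambda>\<omega>. alg_theta (\<lambda>s. gw s \<omega>) (\<lambda>s. \<eta>w s \<omega>) n) \<in> borel_measurable N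
       \<and> (\<lambda>\<omega>. alg_S2 (\<lambda>s. gw s \<omega>) (\<lambda>s. \<eta>w s \<omega>) n) \<in> borel_measurable N
       \<and> (\<lambda>\<omega>. alg_Q (\<lambda>s. gw s \<omega>) (\<lambda>s. \<eta>w s \<omega>) n) \<in> borel_measurable N"
  using g e
proof (induction n)
  case 0
  then show ?case by simp
next
  case (Suc n)
  have IH: "(\<lambda>\<omega>. alg_theta (\<lambda>s. gw s \<omega>) (\<lambda>s. \<eta>w s \<omega>) n) \<in> borel_measurable N"
           "(\<lambda>\<omega>. alg_S2 (\<lambda>s. gw s \<omega>) (\<lambda>s. \<eta>w s \<omega>) n) \<in> borel_measurable N"
           "(\<lambda>\<omega>. alg_Q (\<lambda>s. gw s \<omega>) (\<lambda>s. \<eta>w s \<omega>) n) \<in> borel_measurable N"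
    using Suc by auto
  have [measurable]: "gw (Suc n) \<in> borel_measurable N" "\<eta>w (Suc n) \<in> borel_measurable N" using Suc.prems by auto
  note [measurable] = IH
  have s2: "(\<lambda>\<omega>. alg_S2 (\<lambda>s. gw s \<omega>) (\<lambda>s. \<eta>w s \<omega>) (Suc n)) \<in> borel_measurable N" by simp
  show ?case
  proof (intro conjI)
    show "(\<lambda>\<omega>. alg_theta (\<lambda>s. gw s \<omega>) (\<lambda>s. \<eta>w s \<omega>) (Suc n)) \<in> borel_measurable N" by simp
    show "(\<lambda>\<omega>. alg_S2 (\<lambda>s. gw s \<omega>) (\<lambda>s. \<eta>w s \<omega>) (Suc n)) \<in> borel_measurable N" by (rule s2)
    note [measurable] = s2
    show "(\<lambda>\<omega>. alg_Q (\<lambda>s. gw s \<omega>) (\<lambda>s. \<eta>w s \<omega>) (Suc n)) \<in> borel_measurable N"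
      by (subst alg_Q.simps) measurable
  qed
qed

lemma integral_mult_cond_exp:
  fixes f u w :: "'w \<Rightarrow> real"
  assumes "finite_measure M" and sub: "subalgebra M Ft"
    and f: "f \<in> borel_measurable Ft" "AE \<omega> in M. \<bar>f \<omega>\<bar> \<le> C"
    and u: "u \<in> borel_measurable M" "AE \<omega> in M. \<bar>u \<omega>\<bar> \<le> G"
    and w: "w \<in> borel_measurable M" and ce: "AE \<omega> in M. real_cond_exp M Ft u \<omega> = w \<omega>"
  shows "integrable M (\<lambda>\<omega>. f \<omega> * u \<omega>)" and "integrable M (\<lambda>\<omega>. f \<omega> * w \<omega>)"
    and "(\<integral>\<omega>. f \<omega> * u \<omega> \<partial>M) = (\<integral>\<omega>. f \<omega> * w \<omega> \<partial>M)"
proof -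
  interpret finite_measure_subalgebra M Ft
    using assms(1) sub by (simp add: finite_measure_subalgebra_def finite_measure_subalgebra_axioms_def)
  have [measurable]: "f \<in> borel_measurable M" using measurable_from_subalg[OF sub f(1)] .
  note [measurable] = u(1) w
  show fu: "integrable M (\<lambda>\<omega>. f \<omega> * u \<omega>)"
  proof (rule integrable_const_bound[where B="\<bar>C\<bar> * \<bar>G\<bar>"])
    show "AE \<omega> in M. norm (f \<omega> * u \<omega>) \<le> \<bar>C\<bar> * \<bar>G\<bar>"
      using f(2) u(2) by eventually_elim (auto simp: abs_mult intro: mult_mono)
  qed measurable
  note cond = real_cond_exp_intg[OF fu f(1) u(1)]
  have ae: "AE \<omega> in M. f \<omega> * real_cond_exp M Ft u \<omega> = f \<omega> * w \<omega>"
    using ce by eventually_elim simp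
  have m: "(\<lambda>\<omega>. f \<omega> * real_cond_exp M Ft u \<omega>) \<in> borel_measurable M" "(\<lambda>\<omega>. f \<omega> * w \<omega>) \<in> borel_measurable M"
    by measurable
  show "integrable M (\<lambda>\<omega>. f \<omega> * w \<omega>)" by (rule integrable_cong_AE_imp[OF cond(1) m(2) ae])
  have "(\<integral>\<omega>. f \<omega> * w \<omega> \<partial>M) = (\<integral>\<omega>. f \<omega> * real_cond_exp M Ft u \<omega> \<partial>M)"
    by (rule integral_cong_AE[OF m(2) m(1)]) (use ae in \<open>auto elim: AE_mp\<close>)
  then show "(\<integral>\<omega>. f \<omega> * u \<omega> \<partial>M) = (\<integral>\<omega>. f \<omega> * w \<omega> \<partial>M)" using cond(2) by simp
qed

lemma integral_inner_cond_exp: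
  fixes h g v :: "'w \<Rightarrow> 'a::euclidean_space"
  assumes M: "finite_measure M" and sub: "subalgebra M Ft"
    and h: "h \<in> borel_measurable Ft" "AE \<omega> in M. norm (h \<omega>) \<le> C"
    and g: "g \<in> borel_measurable M" "AE \<omega> in M. norm (g \<omega>) \<le> G"
    and v: "v \<in> borel_measurable M"
    and ce: "\<And>b. b \<in> Basis \<Longrightarrow> AE \<omega> in M. real_cond_exp M Ft (\<lambda>\<omega>. inner (g \<omega>) b) \<omega> = inner (v \<omega>) b"
  shows "integrable M (\<lambda>\<omega>. inner (h \<omega>) (v \<omega>))"
    and "(\<integral>\<omega>. inner (h \<omega>) (g \<omega>) \<partial>M) = (\<integral>\<omega>. inner (h \<omega>) (v \<omega>) \<partial>M)"
proof -
  have component: "integrable M (\<lambda>\<omega>. inner (h \<omega>) b * inner (g \<omega>) b)"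
      "integrable M (\<lambda>\<omega>. inner (h \<omega>) b * inner (v \<omega>) b)"
      "(\<integral>\<omega>. inner (h \<omega>) b * inner (g \<omega>) b \<partial>M) = (\<integral>\<omega>. inner (h \<omega>) b * inner (v \<omega>) b \<partial>M)"
    if b: "b \<in> Basis" for b
  proof -
    have "(\<lambda>\<omega>. inner (h \<omega>) b) \<in> borel_measurable Ft" using h(1) by measurable
    moreover have "AE \<omega> in M. \<bar>inner (h \<omega>) b\<bar> \<le> C"
      using h(2) by eventually_elim (erule order_trans[OF Basis_le_norm[OF b]])
    moreover have "(\<lambda>\<omega>. inner (g \<omega>) b) \<in> borel_measurable M" using g(1) by measurable
    moreover have "AE \<omega> in M. \<bar>inner (g \<omega>) b\<bar> \<le> G"
      using g(2) by eventually_elim (erule order_trans[OF Basis_le_norm[OF b]])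
    moreover have "(\<lambda>\<omega>. inner (v \<omega>) b) \<in> borel_measurable M" using v by measurable
    ultimately show "integrable M (\<lambda>\<omega>. inner (h \<omega>) b * inner (g \<omega>) b)"
      "integrable M (\<lambda>\<omega>. inner (h \<omega>) b * inner (v \<omega>) b)"
      "(\<integral>\<omega>. inner (h \<omega>) b * inner (g \<omega>) b \<partial>M) = (\<integral>\<omega>. inner (h \<omega>) b * inner (v \<omega>) b \<partial>M)"
      using integral_mult_cond_exp[OF M sub _ _ _ _ _ ce[OF b]] by blast+
  qed
  have inner_sum: "(\<lambda>\<omega>. inner (h \<omega>) (u \<omega>)) = (\<lambda>\<omega>. \<Sum>b\<in>Basis. inner (h \<omega>) b * inner (u \<omega>) b)"
    for u :: "'w \<Rightarrow> 'a"
    by (rule ext) (rule euclidean_inner)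
  show "integrable M (\<lambda>\<omega>. inner (h \<omega>) (v \<omega>))"
    unfolding inner_sum by (intro Bochner_Integration.integrable_sum component(2))
  have "(\<integral>\<omega>. inner (h \<omega>) (g \<omega>) \<partial>M) = (\<Sum>b\<in>Basis. \<integral>\<omega>. inner (h \<omega>) b * inner (g \<omega>) b \<partial>M)"
    unfolding inner_sum by (intro Bochner_Integration.integral_sum component(1))
  also have "\<dots> = (\<Sum>b\<in>Basis. \<integral>\<omega>. inner (h \<omega>) b * inner (v \<omega>) b \<partial>M)"
    using component(3) by (intro sum.cong) auto
  also have "\<dots> = (\<integral>\<omega>. inner (h \<omega>) (v \<omega>) \<partial>M)"
    unfolding inner_sum by (intro Bochner_Integration.integral_sum[symmetric] component(2))
  finally show "(\<integral>\<omega>. inner (h \<omega>) (g \<omega>) \<partial>M) = (\<integral>\<omega>. inner (h \<omega>) (v \<omega>) \<partial>M)" .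
qed

text \<open>The decrement \<open>a \<langle>g, y - x\<^sup>*\<rangle>\<close> has the same integral as \<open>a \<langle>\<nabla>F(y), y - x\<^sup>*\<rangle> \<ge> 0\<close>
  because \<open>a\<close> and \<open>y\<close> are \<open>Ft\<close>-measurable.\<close>

lemma integral_coherent_decrement_nonneg:
  fixes a :: "'w \<Rightarrow> real" and y g :: "'w \<Rightarrow> 'a::euclidean_space" and F' :: "'a \<Rightarrow> 'a"
  assumes M: "finite_measure M" and sub: "subalgebra M Ft"
    and a: "a \<in> borel_measurable Ft" "\<And>\<omega>. \<omega> \<in> space M \<Longrightarrow> 0 \<le> a \<omega>" "AE \<omega> in M. a \<omega> \<le> C"
    and y: "y \<in> borel_measurable Ft" "AE \<omega> in M. norm (y \<omega>) \<le> D"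
    and g: "g \<in> borel_measurable M" "AE \<omega> in M. norm (g \<omega>) \<le> G"
    and F': "continuous_on UNIV F'" "\<And>x. inner (F' x) (x - xs) \<ge> 0"
    and ce: "\<And>b. b \<in> Basis \<Longrightarrow>
      AE \<omega> in M. real_cond_exp M Ft (\<lambda>\<omega>. inner (g \<omega>) b) \<omega> = inner (F' (y \<omega>)) b"
  shows "integrable M (\<lambda>\<omega>. a \<omega> * inner (g \<omega>) (y \<omega> - xs))"
    and "0 \<le> (\<integral>\<omega>. a \<omega> * inner (g \<omega>) (y \<omega> - xs) \<partial>M)"
proof -
  interpret finite_measure M by (rule M)
  define h where "h \<omega> = a \<omega> *\<^sub>R (y \<omega> - xs)" for \<omega>
  have hg: "a \<omega> * inner (g \<omega>) (y \<omega> - xs) = inner (h \<omega>) (g \<omega>)" for \<omega>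
    unfolding h_def by (simp add: inner_commute)
  have h: "h \<in> borel_measurable Ft" unfolding h_def using a(1) y(1) by measurable
  have [measurable]: "h \<in> borel_measurable M" using measurable_from_subalg[OF sub h] .
  note [measurable] = g(1)
  have Fy: "(\<lambda>\<omega>. F' (y \<omega>)) \<in> borel_measurable M"
    using borel_measurable_continuous_onI[OF F'(1)] measurable_from_subalg[OF sub y(1)] by measurable
  have hb: "AE \<omega> in M. norm (h \<omega>) \<le> \<bar>C\<bar> * (\<bar>D\<bar> + norm xs)"
    using AE_space a(3) y(2)
  proof eventually_elim
    case (elim \<omega>)
    have "norm (y \<omega> - xs) \<le> \<bar>D\<bar> + norm xs" using norm_triangle_ineq4[of "y \<omega>" xs] elim(3) by linarith
    then show ?case unfolding h_def using a(2)[OF elim(1)] elim(2) by (auto intro: mult_mono)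
  qed
  note cond = integral_inner_cond_exp[OF M sub h hb g Fy ce]
  show "integrable M (\<lambda>\<omega>. a \<omega> * inner (g \<omega>) (y \<omega> - xs))"
    unfolding hg
  proof (rule integrable_const_bound[where B="\<bar>C\<bar> * (\<bar>D\<bar> + norm xs) * \<bar>G\<bar>"])
    show "AE \<omega> in M. norm (inner (h \<omega>) (g \<omega>)) \<le> \<bar>C\<bar> * (\<bar>D\<bar> + norm xs) * \<bar>G\<bar>"
      using hb g(2)
    proof eventually_elim
      case (elim \<omega>)
      have "\<bar>inner (h \<omega>) (g \<omega>)\<bar> \<le> norm (h \<omega>) * norm (g \<omega>)" by (rule Cauchy_Schwarz_ineq2)
      also have "\<dots> \<le> \<bar>C\<bar> * (\<bar>D\<bar> + norm xs) * \<bar>G\<bar>" using elim by (intro mult_mono) auto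
      finally show ?case by simp
    qed
  qed measurable
  have "0 \<le> inner (h \<omega>) (F' (y \<omega>))" if "\<omega> \<in> space M" for \<omega>
    unfolding h_def using a(2)[OF that] F'(2)[of "y \<omega>"] by (simp add: inner_commute)
  then have "0 \<le> (\<integral>\<omega>. inner (h \<omega>) (F' (y \<omega>)) \<partial>M)" by (intro integral_nonneg_AE AE_I2)
  then show "0 \<le> (\<integral>\<omega>. a \<omega> * inner (g \<omega>) (y \<omega> - xs) \<partial>M)" unfolding hg using cond(2) by simp
qed

lemma integral_indicator_le_of_coherent_step:
  fixes Zj Zs c :: "'w \<Rightarrow> real" and y g :: "'w \<Rightarrow> 'a::euclidean_space" and F' :: "'a \<Rightarrow> 'a"
  assumes M: "finite_measure M" and sub: "subalgebra M Ft" and B: "B \<in> sets Ft"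
    and Z: "integrable M Zj" "integrable M Zs"
    and c: "c \<in> borel_measurable Ft" "\<And>\<omega>. \<omega> \<in> space M \<Longrightarrow> 0 \<le> c \<omega>" "AE \<omega> in M. c \<omega> \<le> C"
    and y: "y \<in> borel_measurable Ft" "AE \<omega> in M. norm (y \<omega>) \<le> D"
    and g: "g \<in> borel_measurable M" "AE \<omega> in M. norm (g \<omega>) \<le> G"
    and F': "continuous_on UNIV F'" "\<And>x. inner (F' x) (x - xs) \<ge> 0"
    and ce: "\<And>b. b \<in> Basis \<Longrightarrow>
      AE \<omega> in M. real_cond_exp M Ft (\<lambda>\<omega>. inner (g \<omega>) b) \<omega> = inner (F' (y \<omega>)) b"
    and step: "AE \<omega> in M. Zs \<omega> \<le> Zj \<omega> - c \<omega> * inner (g \<omega>) (y \<omega> - xs)"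
  shows "(\<integral>\<omega>. indicator B \<omega> * Zs \<omega> \<partial>M) \<le> (\<integral>\<omega>. indicator B \<omega> * Zj \<omega> \<partial>M)"
proof -
  define a where "a \<omega> = indicator B \<omega> * c \<omega>" for \<omega>
  have BM: "B \<in> sets M" using B sub unfolding subalgebra_def by blast
  have a_meas: "a \<in> borel_measurable Ft" unfolding a_def using B c(1) by measurable
  have a_nonneg: "0 \<le> a \<omega>" if "\<omega> \<in> space M" for \<omega> unfolding a_def using c(2)[OF that] by simp
  have a_le: "AE \<omega> in M. a \<omega> \<le> \<bar>C\<bar>"
    using AE_space c(3) by eventually_elim (use c(2) in \<open>auto simp: a_def indicator_def\<close>)
  note decrement = integral_coherent_decrement_nonneg[OF M sub a_meas a_nonneg a_le y g F' ce]
  have "AE \<omega> in M. indicator B \<omega> * Zs \<omega> \<le> indicator B \<omega> * Zj \<omega> - a \<omega> * inner (g \<omega>) (y \<omega> - xs)"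
    using step
  proof eventually_elim
    case (elim \<omega>)
    then have "indicator B \<omega> * Zs \<omega> \<le> indicator B \<omega> * (Zj \<omega> - c \<omega> * inner (g \<omega>) (y \<omega> - xs))"
      by (intro mult_left_mono) auto
    then show ?case unfolding a_def by (simp add: algebra_simps)
  qed
  then have "(\<integral>\<omega>. indicator B \<omega> * Zs \<omega> \<partial>M)
      \<le> (\<integral>\<omega>. indicator B \<omega> * Zj \<omega> - a \<omega> * inner (g \<omega>) (y \<omega> - xs) \<partial>M)"
    using integrable_mult_indicator[OF BM Z(1)] integrable_mult_indicator[OF BM Z(2)] decrement(1)
    by (intro integral_mono_AE) auto
  also have "\<dots> \<le> (\<integral>\<omega>. indicator B \<omega> * Zj \<omega> \<partial>M)"
    using integrable_mult_indicator[OF BM Z(1)] decrement by (simp add: Bochner_Integration.integral_diff)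
  finally show ?thesis .
qed

locale coherent_run = alg_run M gw \<eta>w + prob_space M
  for M :: "'w measure" and gw :: "nat \<Rightarrow> 'w \<Rightarrow> 'a::euclidean_space" and \<eta>w +
  fixes F' :: "'a \<Rightarrow> 'a" and xs :: 'a and G \<gamma> :: real
  assumes G_pos: "G > 0"
    and continuous_F': "continuous_on UNIV F'" and coherent: "\<And>x. inner (F' x) (x - xs) \<ge> 0"
    and \<eta>w_nonneg: "\<And>t \<omega>. t \<ge> 1 \<Longrightarrow> \<omega> \<in> space M \<Longrightarrow> \<eta>w t \<omega> \<ge> 0"
    and cond_exp_gw: "\<And>t b. t \<ge> 1 \<Longrightarrow> b \<in> Basis \<Longrightarrow> AE \<omega> in M.
          real_cond_exp M (Fi t) (\<lambda>\<omega>. inner (gw t \<omega>) b) \<omega> = inner (F' (rand_x gw \<eta>w t \<omega>)) b"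
    and gw_bounded: "AE \<omega> in M. \<forall>t\<ge>1. norm (gw t \<omega>) \<le> G"
    and steps_bounded: "AE \<omega> in M.
          summable (\<lambda>t. (\<eta>w (Suc t) \<omega>)^2 * (norm (gw (Suc t) \<omega>))^2) \<and>
          (\<Sum>t. (\<eta>w (Suc t) \<omega>)^2 * (norm (gw (Suc t) \<omega>))^2) < \<gamma> \<and> (\<forall>t\<ge>1. \<eta>w t \<omega> \<le> 1 / G)"
begin

definition Z :: "nat \<Rightarrow> 'w \<Rightarrow> real" where
  "Z j \<omega> = lyapunov_disc xs \<gamma> (\<lambda>s. gw s \<omega>) (\<lambda>s. \<eta>w s \<omega>) j"

lemma AE_run_bounded: "AE \<omega> in M. (\<forall>t\<ge>1. norm (\<eta>w t \<omega> *\<^sub>R gw t \<omega>) \<le> 1)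
    \<and> (\<forall>k. alg_S2 (\<lambda>s. gw s \<omega>) (\<lambda>s. \<eta>w s \<omega>) k \<le> 4 + \<gamma>)"
  using AE_space gw_bounded steps_bounded
proof eventually_elim
  case (elim \<omega>)
  have "norm (\<eta>w t \<omega> *\<^sub>R gw t \<omega>) \<le> 1" if "t \<ge> 1" for t
  proof -
    have "norm (\<eta>w t \<omega> *\<^sub>R gw t \<omega>) = \<eta>w t \<omega> * norm (gw t \<omega>)" using \<eta>w_nonneg[OF that elim(1)] by simp
    also have "\<dots> \<le> (1/G) * G" using elim that \<eta>w_nonneg[OF that elim(1)] G_pos by (intro mult_mono) auto
    finally show ?thesis using G_pos by simp
  qed
  moreover have "alg_S2 (\<lambda>s. gw s \<omega>) (\<lambda>s. \<eta>w s \<omega>) k \<le> 4 + \<gamma>" for k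
    using alg_S2_le_suminf[of "\<lambda>s. \<eta>w s \<omega>" "\<lambda>s. gw s \<omega>" k] elim(3) by simp
  ultimately show ?case by blast
qed

lemma measurable_alg_state_Fi: "(\<lambda>\<omega>. alg_theta (\<lambda>s. gw s \<omega>) (\<lambda>s. \<eta>w s \<omega>) j) \<in> borel_measurable (Fi (Suc j))
    \<and> (\<lambda>\<omega>. alg_S2 (\<lambda>s. gw s \<omega>) (\<lambda>s. \<eta>w s \<omega>) j) \<in> borel_measurable (Fi (Suc j))
    \<and> (\<lambda>\<omega>. alg_Q (\<lambda>s. gw s \<omega>) (\<lambda>s. \<eta>w s \<omega>) j) \<in> borel_measurable (Fi (Suc j))"
  by (rule measurable_alg_state) (auto intro: gw_Fi \<eta>w_Fi)

lemma Z_Fi: "Z j \<in> borel_measurable (Fi (Suc j))"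
proof -
  note [measurable] = measurable_alg_state_Fi[of j, THEN conjunct1]
    measurable_alg_state_Fi[of j, THEN conjunct2, THEN conjunct1]
    measurable_alg_state_Fi[of j, THEN conjunct2, THEN conjunct2]
  show ?thesis
    unfolding Z_def lyapunov_disc_def lyapunov_def alg_potential_def psi_star_sq_def quad_max_def quad_argmax_def
    by measurable
qed

lemma integrable_Z: "integrable M (Z j)"
proof (rule integrable_const_bound[where B="exp (real j / 2) + real j * norm xs + lyapunov_const \<gamma> (norm xs)"])
  show "AE \<omega> in M. norm (Z j \<omega>) \<le> exp (real j / 2) + real j * norm xs + lyapunov_const \<gamma> (norm xs)"
    using AE_run_bounded by eventually_elim (simp add: Z_def lyapunov_disc_le lyapunov_disc_nonneg)
  show "Z j \<in> borel_measurable M" by (rule measurable_from_subalg[OF subalgebra_Fi Z_Fi])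
qed

lemma Z_0: "Z 0 \<omega> = 1 + lyapunov_const \<gamma> (norm xs)"
  by (simp add: Z_def lyapunov_disc_def lyapunov_def alg_potential_def psi_star_sq_def)

lemma Z_supermartingale:
  assumes B: "B \<in> sets (Fi (Suc j))"
  shows "(\<integral>\<omega>. indicator B \<omega> * Z (Suc j) \<omega> \<partial>M) \<le> (\<integral>\<omega>. indicator B \<omega> * Z j \<omega> \<partial>M)"
proof (rule integral_indicator_le_of_coherent_step[OF _ subalgebra_Fi B integrable_Z integrable_Z
      _ _ _ rand_x_Fi _ measurable_gw _ continuous_F' coherent cond_exp_gw])
  define E where "E \<omega> = exp (-3 * (alg_S2 (\<lambda>s. gw s \<omega>) (\<lambda>s. \<eta>w s \<omega>) j - 4))" for \<omega>
  have [measurable]: "E \<in> borel_measurable (Fi (Suc j))"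
    using measurable_alg_state_Fi[of j, THEN conjunct2, THEN conjunct1] unfolding E_def by measurable
  have E: "0 \<le> E \<omega>" "E \<omega> \<le> 1" for \<omega> unfolding E_def using alg_S2_ge by auto
  show "finite_measure M" by unfold_locales
  show "(\<lambda>\<omega>. E \<omega> * \<eta>w (Suc j) \<omega>) \<in> borel_measurable (Fi (Suc j))"
    using \<eta>w_Fi[of "Suc j" "Suc j"] by measurable
  show "0 \<le> E \<omega> * \<eta>w (Suc j) \<omega>" if "\<omega> \<in> space M" for \<omega> using E \<eta>w_nonneg[OF _ that] by simp
  show "AE \<omega> in M. E \<omega> * \<eta>w (Suc j) \<omega> \<le> 1 / G"
    using AE_space steps_bounded
    by eventually_elim (use E \<eta>w_nonneg in \<open>auto intro: mult_le_one[THEN order_trans] order_trans[OF mult_left_le_one_le]\<close>)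
  show "AE \<omega> in M. norm (rand_x gw \<eta>w (Suc j) \<omega>) \<le> exp (real j / 2)"
    using AE_run_bounded by eventually_elim (simp add: rand_x_def norm_alg_x_Suc_le_exp)
  show "AE \<omega> in M. norm (gw (Suc j) \<omega>) \<le> G" using gw_bounded by eventually_elim simp
  show "AE \<omega> in M. Z (Suc j) \<omega> \<le> Z j \<omega> - E \<omega> * \<eta>w (Suc j) \<omega> * inner (gw (Suc j) \<omega>) (rand_x gw \<eta>w (Suc j) \<omega> - xs)"
    using AE_run_bounded
  proof eventually_elim
    case (elim \<omega>)
    then have "norm (\<eta>w (Suc j) \<omega> *\<^sub>R gw (Suc j) \<omega>) \<le> 1"
      and "alg_S2 (\<lambda>s. gw s \<omega>) (\<lambda>s. \<eta>w s \<omega>) j \<le> 4 + \<gamma>" by auto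
    from lyapunov_disc_Suc_le[OF this, of xs] show ?case unfolding Z_def E_def rand_x_def by (simp add: mult.assoc)
  qed
qed auto

theorem AE_bdd_above_norm_rand_x: "AE \<omega> in M. bdd_above ((\<lambda>t. norm (rand_x gw \<eta>w t \<omega>)) ` {1..})"
proof -
  interpret Z: nonneg_supermartingale M "\<lambda>j. Fi (Suc j)" Z "1 + lyapunov_const \<gamma> (norm xs)"
    by unfold_locales (use sets_Fi space_Fi sets_Fi_mono Z_Fi integrable_Z Z_0 Z_supermartingale
        AE_run_bounded in \<open>auto simp: Z_def lyapunov_disc_nonneg elim: AE_mp\<close>)
  show ?thesis
    using Z.AE_bdd_above AE_run_bounded
  proof eventually_elim
    case (elim \<omega>)
    then obtain C where C: "\<And>j. Z j \<omega> \<le> C" by (auto simp: bdd_above_def)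
    have bound: "norm (rand_x gw \<eta>w (Suc n) \<omega>) \<le> C * exp (3 * \<gamma>)" for n
    proof -
      have "norm (rand_x gw \<eta>w (Suc n) \<omega>) \<le> Z n \<omega> * exp (3 * \<gamma>)"
        using norm_alg_x_Suc_le_lyapunov_disc[of "\<lambda>s. gw s \<omega>" "\<lambda>s. \<eta>w s \<omega>" n \<gamma> xs] elim(2)
        unfolding rand_x_def Z_def by simp
      also have "\<dots> \<le> C * exp (3 * \<gamma>)" using C[of n] by (intro mult_right_mono) auto
      finally show ?thesis .
    qed
    show ?case
    proof (rule bdd_aboveI2)
      fix t :: nat assume "t \<in> {1..}"
      then obtain n where "t = Suc n" by (cases t) auto
      then show "norm (rand_x gw \<eta>w t \<omega>) \<le> C * exp (3 * \<gamma>)" using bound by simp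
    qed
  qed
qed

end

lemma variationally_coherent_AE_bdd_rand_x:
  fixes gw :: "nat \<Rightarrow> 'w \<Rightarrow> 'a::euclidean_space"
  assumes "prob_space M" "G > 0" "variationally_coherent F F' xs"
    and "\<forall>t\<ge>1. gw t \<in> borel_measurable M" "\<forall>t\<ge>1. rand_x gw \<eta>w t \<in> borel_measurable M"
    and "\<forall>t\<ge>1. \<eta>w t \<in> borel_measurable (alg_filtration M gw \<eta>w t)"
    and "\<forall>t\<ge>1. \<forall>w\<in>space M. \<eta>w t w \<ge> 0"
    and "\<forall>t\<ge>1. \<forall>b\<in>Basis. AE w in M.
          real_cond_exp M (alg_filtration M gw \<eta>w t) (\<lambda>w. inner (gw t w) b) w
            = inner (F' (rand_x gw \<eta>w t w)) b"
    and "AE w in M. \<forall>t\<ge>1. norm (gw t w) \<le> G"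
    and steps: "AE w in M.
          summable (\<lambda>t. (\<eta>w (Suc t) w)^2 * (norm (gw (Suc t) w))^2) \<and>
          (\<Sum>t. (\<eta>w (Suc t) w)^2 * (norm (gw (Suc t) w))^2) < \<gamma> \<and>
          \<not> summable (\<lambda>t. \<eta>w (Suc t) w) \<and>
          (\<forall>t\<ge>1. \<eta>w t w \<le> 1 / G)"
  shows "AE w in M. bdd_above ((\<lambda>t. norm (rand_x gw \<eta>w t w)) ` {1..})"
proof -
  have "AE w in M.
      summable (\<lambda>t. (\<eta>w (Suc t) w)^2 * (norm (gw (Suc t) w))^2) \<and>
      (\<Sum>t. (\<eta>w (Suc t) w)^2 * (norm (gw (Suc t) w))^2) < \<gamma> \<and> (\<forall>t\<ge>1. \<eta>w t w \<le> 1 / G)"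
    using steps by eventually_elim blast
  then interpret coherent_run M gw \<eta>w F' xs G \<gamma>
    using assms by (intro coherent_run.intro alg_run.intro coherent_run_axioms.intro)
      (simp_all add: variationally_coherent_def)
  show ?thesis by (rule AE_bdd_above_norm_rand_x)
qed

theorem lemma20:
  fixes M :: "'w measure"
    and gw :: "nat \<Rightarrow> 'w \<Rightarrow> 'a::euclidean_space"
    and \<eta>w :: "nat \<Rightarrow> 'w \<Rightarrow> real"
    and F :: "'a \<Rightarrow> real" and F' :: "'a \<Rightarrow> 'a" and xs :: 'a
    and G \<gamma> :: real
  shows
   "(\<forall>(g :: nat \<Rightarrow> 'a) (\<eta> :: nat \<Rightarrow> real) t (y :: 'a).
       (\<forall>s\<ge>1. \<eta> s \<ge> 0) \<longrightarrow> 1 \<le> t \<longrightarrow>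
       norm (alg_x g \<eta> t) \<le>
         max (norm y + sqrt ((alg_S g \<eta> (t - 1) + 2) * bregman (alg_phi g \<eta> t) y (alg_x g \<eta> t)))
             (max (2 * norm y)
                  (4 * (alg_S g \<eta> (t - 1) + 2) * bregman (alg_phi g \<eta> t) y (alg_x g \<eta> t))))
    \<and>
    ((prob_space M \<and> G > 0 \<and> \<gamma> > 0 \<and>
      variationally_coherent F F' xs \<and>
      (\<forall>t\<ge>1. gw t \<in> borel_measurable M) \<and>
      (\<forall>t\<ge>1. rand_x gw \<eta>w t \<in> borel_measurable M) \<and>
      (\<forall>t\<ge>1. \<eta>w t \<in> borel_measurable (alg_filtration M gw \<eta>w t)) \<and>
      (\<forall>t\<ge>1. \<forall>w\<in>space M. \<eta>w t w \<ge> 0) \<and>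
      (\<forall>t\<ge>1. \<forall>b\<in>Basis. AE w in M.
          real_cond_exp M (alg_filtration M gw \<eta>w t) (\<lambda>w. inner (gw t w) b) w
            = inner (F' (rand_x gw \<eta>w t w)) b) \<and>
      (AE w in M. \<forall>t\<ge>1. norm (gw t w) \<le> G) \<and>
      (AE w in M.
          summable (\<lambda>t. (\<eta>w (Suc t) w)^2 * (norm (gw (Suc t) w))^2) \<and>
          (\<Sum>t. (\<eta>w (Suc t) w)^2 * (norm (gw (Suc t) w))^2) < \<gamma> \<and>
          \<not> summable (\<lambda>t. \<eta>w (Suc t) w) \<and>
          (\<forall>t\<ge>1. \<eta>w t w \<le> 1 / G)))
     \<longrightarrow> (AE w in M. bdd_above ((\<lambda>t. norm (rand_x gw \<eta>w t w)) ` {1..})))"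
proof (intro conjI impI allI)
  fix g :: "nat \<Rightarrow> 'a" and \<eta> :: "nat \<Rightarrow> real" and t :: nat and y :: 'a
  assume "1 \<le> t"
  then show "norm (alg_x g \<eta> t) \<le>
      max (norm y + sqrt ((alg_S g \<eta> (t - 1) + 2) * bregman (alg_phi g \<eta> t) y (alg_x g \<eta> t)))
          (max (2 * norm y) (4 * (alg_S g \<eta> (t - 1) + 2) * bregman (alg_phi g \<eta> t) y (alg_x g \<eta> t)))"
    by (rule norm_alg_x_le_bregman)
qed (elim conjE, rule variationally_coherent_AE_bdd_rand_x; assumption)

end
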